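(* Let $\tau\subset\mathbb{Z}^4_{\ge 0}$ be a B-facet. Then $\tau$ is of (at least) one of the following four types: (1) a $B_1$-facet: there is an index $i\in\{1,2,3,4\}$ such that exactly one point of $\tau$ has nonzero $i$-th coordinate, and that coordinate equals $1$; (2) a $B_2$-facet: there are distinct indices $i,j$ such that for every point $x\in\tau$ we have $(x_i,x_j)\in\{(0,0),(1,0),(0,1)\}$; (3) a flat border: there are distinct indices $i,j$ and a point $C\in\tau$ with $C_i=C_j=1$ such that $\tau$ contains at least two distinct points $A,B$ with $A_i=A_j=B_i=B_j=0$, and every point of $\tau$ other than $C$ lies in $\{x_i=0\}\cup\{x_j=0\}$; (4) the standard cross-polytope: $\tau=\{(1,1,0,0),(1,0,1,0),(1,0,0,1),(0,1,1,0),(0,1,0,1),(0,0,1,1)\}$.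
   Context: Conventions: a polytope is a finite subset of $\mathbb{Z}^n$; its dimension is the dimension of its affine span. A $k$-simplex is a set of $k+1$ affinely independent points. A $k$-simplex $S\subset\mathbb{Z}^n_{\ge0}$ is a B-simplex if there is a coordinate index $i$ such that exactly $k$ of its vertices lie in the hyperplane $\{x_i=0\}$ and the remaining vertex has $i$-th coordinate equal to $1$ (i.e. it is a pyramid of height $1$ with base on a coordinate hyperplane; for $k=0$ this means the point has some coordinate equal to $1$). A B-facet in $\mathbb{Z}^n_{\ge0}$ is a finite set $\tau\subset\mathbb{Z}^n_{\ge 0}$ whose affine span is a hyperplane $\{x:\langle a,x\rangle=b\}$ with all $a_j>0$ (positive normal covector), such that every $(n-1)$-simplex with vertices in $\tau$ is a B-simplex. *)

theory Defs
  imports "HOL-Analysis.Analysis"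
begin

text \<open>Lattice points of Z^n are modelled as int ^ 'n (the dimension n = CARD('n)).
  Affine notions are computed after the embedding into real ^ 'n.\<close>

definition rvec :: "int ^ 'n \<Rightarrow> real ^ 'n" where
  "rvec x = (\<chi> i. real_of_int (x $ i))"

definition nonneg_pts :: "(int ^ 'n) set \<Rightarrow> bool" where
  "nonneg_pts S \<longleftrightarrow> (\<forall>x\<in>S. \<forall>i. 0 \<le> x $ i)"

definition is_simplex :: "nat \<Rightarrow> (int ^ 'n) set \<Rightarrow> bool" where
  "is_simplex k S \<longleftrightarrow> finite S \<and> card S = k + 1 \<and> \<not> affine_dependent (rvec ` S)"

definition B_simplex :: "(int ^ 'n) set \<Rightarrow> bool" where
  "B_simplex S \<longleftrightarrow> (\<exists>k. is_simplex k S \<and> nonneg_pts S \<and>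
     (\<exists>i. card {v\<in>S. v $ i = 0} = k \<and> (\<forall>v\<in>S. v $ i \<noteq> 0 \<longrightarrow> v $ i = 1)))"

definition B_facet :: "(int ^ 'n) set \<Rightarrow> bool" where
  "B_facet \<tau> \<longleftrightarrow> finite \<tau> \<and> nonneg_pts \<tau> \<and>
     (\<exists>(a :: real ^ 'n) b. (\<forall>j. 0 < a $ j) \<and> affine hull (rvec ` \<tau>) = {x. a \<bullet> x = b}) \<and>
     (\<forall>S\<subseteq>\<tau>. is_simplex (CARD('n) - 1) S \<longrightarrow> B_simplex S)"

definition B1_facet :: "(int ^ 'n) set \<Rightarrow> bool" where
  "B1_facet \<tau> \<longleftrightarrow> (\<exists>i. card {x\<in>\<tau>. x $ i \<noteq> 0} = 1 \<and> (\<forall>x\<in>\<tau>. x $ i \<noteq> 0 \<longrightarrow> x $ i = 1))"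

definition B2_facet :: "(int ^ 'n) set \<Rightarrow> bool" where
  "B2_facet \<tau> \<longleftrightarrow> (\<exists>i j. i \<noteq> j \<and> (\<forall>x\<in>\<tau>. (x $ i, x $ j) \<in> {(0,0),(1,0),(0,1)}))"

definition flat_border :: "(int ^ 'n) set \<Rightarrow> bool" where
  "flat_border \<tau> \<longleftrightarrow> (\<exists>i j C. i \<noteq> j \<and> C \<in> \<tau> \<and> C $ i = 1 \<and> C $ j = 1 \<and>
     (\<exists>A B. A \<in> \<tau> \<and> B \<in> \<tau> \<and> A \<noteq> B \<and> A $ i = 0 \<and> A $ j = 0 \<and> B $ i = 0 \<and> B $ j = 0) \<and>
     (\<forall>x\<in>\<tau>. x \<noteq> C \<longrightarrow> x $ i = 0 \<or> x $ j = 0))"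

definition std_cross_polytope :: "(int ^ 4) set" where
  "std_cross_polytope = {vector [1,1,0,0], vector [1,0,1,0], vector [1,0,0,1],
                         vector [0,1,1,0], vector [0,1,0,1], vector [0,0,1,1]}"

end

theory Submission
  imports Defs
begin

(* The facet lies in a hyperplane \<alpha>\<bullet>x = \<beta> with \<alpha> > 0 and \<beta> > 0. Hence four of its points are
  affinely independent iff their 4x4 determinant is non-zero, and the B-simplex condition says
  that such a quadruple has a "unit coordinate", equal to 1 at one point and 0 at the other three.
  Since \<alpha> > 0, the facet is an antichain, and two of its points agreeing in three coordinates
  coincide.

  A pyramid over a coordinate c is a non-degenerate quadruple with x_c = 1 at one point (the apex)
  and x_c = 0 at the others. Pyramids exist, and one can be found over a coordinate c on which the
  whole facet is 0/1-valued. The facet then splits into a top layer x_c = 1 and a bottom layer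
  x_c = 0, and the theorem follows by analysing the top layer. A single top point gives a
  B1-facet and two give a B2-facet or a flat border. If the top layer has three points but is
  collinear, all its points vanish at a common coordinate, which gives a B2-facet. Otherwise there
  is a second coordinate j, 0/1-valued on the top layer and vanishing at two top points; if no top
  point has x_j = 1 this is again a B2-facet, and otherwise the unique top point with x_j = 1
  leads to a flat border or to the cross-polytope. Most steps use the unit coordinate of a
  suitable non-degenerate quadruple, which makes two points of the facet differ by a swap of 0
  and 1 in some coordinate. *)

lemma vector_4_nth [simp]:
  "(vector [x,y,z,w] :: ('a::zero)^4) $ 1 = x"
  "(vector [x,y,z,w] :: ('a::zero)^4) $ 2 = y"
  "(vector [x,y,z,w] :: ('a::zero)^4) $ 3 = z"
  "(vector [x,y,z,w] :: ('a::zero)^4) $ 4 = w"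
  unfolding vector_def by simp_all

lemma distinct4_cases:
  assumes "distinct [i,j,k,l::4]"
  shows "n = i \<or> n = j \<or> n = k \<or> n = l"
proof -
  have "card {i,j,k,l} = CARD(4)" using assms by simp
  then have "{i,j,k,l} = UNIV" by (metis card_subset_eq finite subset_UNIV)
  then show ?thesis by auto
qed

lemma ex_distinct4:
  assumes "distinct [c,j,m,l::4]"
  shows "(\<exists>n. P n) \<longleftrightarrow> P c \<or> P j \<or> P m \<or> P l"
  using distinct4_cases[OF assms] by metis

lemma distinct3_extend:
  assumes "distinct [i,j,k::4]"
  obtains l where "distinct [i,j,k,l]"
proof -
  have "card {i,j,k} < CARD(4)" using assms by simp
  then obtain l where "l \<notin> {i,j,k}" by (metis UNIV_I card_mono finite not_le subsetI)
  then show ?thesis using assms by (intro that) auto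
qed

lemma distinct2_extend:
  assumes "c \<noteq> (j::4)"
  obtains m n where "distinct [c,j,m,n]"
proof -
  have "card {c,j} < CARD(4)" using assms by simp
  then obtain m where "m \<notin> {c,j}" by (metis UNIV_I card_mono finite not_le subsetI)
  then have "distinct [c,j,m]" using assms by auto
  then show ?thesis using distinct3_extend that by blast
qed

lemma distinct1_extend: obtains k1 k2 k3 where "distinct [c::4,k1,k2,k3]"
proof -
  obtain k where "k \<noteq> c" by (metis zero_neq_one)
  then show ?thesis using distinct2_extend[of k c] that by (metis distinct_length_2_or_more)
qed

lemma le_if_distinct4:
  fixes P Q :: "'a::order^4"
  assumes "distinct [c,j,k,l]" "P$c \<le> Q$c" "P$j \<le> Q$j" "P$k \<le> Q$k" "P$l \<le> Q$l"
  shows "P$n \<le> Q$n"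
  using distinct4_cases[OF assms(1), of n] assms(2-5) by auto

lemma card_filter_distinct4:
  assumes "distinct [x,y,z,w]"
  shows "card {v\<in>{x,y,z,w}. P v} =
    of_bool (P x) + of_bool (P y) + of_bool (P z) + of_bool (P w)"
proof -
  have "{v\<in>{x,y,z,w}. P v} = (if P x then {x} else {}) \<union> (if P y then {y} else {}) \<union>
      (if P z then {z} else {}) \<union> (if P w then {w} else {})"
    by auto
  then show ?thesis using assms
    by (cases "P x"; cases "P y"; cases "P z"; cases "P w") (auto simp: card_insert_if)
qed

definition dot4 :: "'a::comm_ring_1^4 \<Rightarrow> 'a^4 \<Rightarrow> 'a" where
  "dot4 f x = f$1 * x$1 + f$2 * x$2 + f$3 * x$3 + f$4 * x$4"

lemma dot4_perm:
  assumes "distinct [i,j,k,l::4]"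
  shows "dot4 f x = f$i * x$i + f$j * x$j + f$k * x$k + f$l * x$l"
proof -
  have "set [i,j,k,l] = UNIV" using distinct4_cases[OF assms] by auto
  then have "dot4 f x = (\<Sum>n\<in>{i,j,k,l}. f$n * x$n)" by (simp add: dot4_def sum_4)
  then show ?thesis using assms by (simp add: algebra_simps)
qed

lemma sum4_perm:
  assumes "distinct [c,j,m,l::4]"
  shows "(x::int^4)$1 + x$2 + x$3 + x$4 = x$c + x$j + x$m + x$l"
  using dot4_perm[OF assms, of "\<chi> _. 1" x] by (simp add: dot4_def)

lemma inner_eq_dot4: "(a::real^4) \<bullet> v = dot4 a v"
  by (simp add: inner_vec_def sum_4 dot4_def)

lemma dot4_scaleR_axis: "dot4 a (s *\<^sub>R axis k 1 :: real^4) = s * a$k"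
  using exhaust_4[of k] by (elim disjE) (simp_all add: dot4_def axis_def)

lemma rvec_nth [simp]: "rvec x $ i = real_of_int (x $ i)"
  by (simp add: rvec_def)

lemma rvec_axis: "rvec (axis m 1) = axis m 1"
  by (simp add: vec_eq_iff axis_def)

lemma dot4_rvec: "dot4 (rvec g) (rvec x) = real_of_int (dot4 g x)"
  by (simp add: dot4_def)

section \<open>Determinants of four vectors\<close>

definition minor2 :: "'a::comm_ring_1^4 \<Rightarrow> 'a^4 \<Rightarrow> 4 \<Rightarrow> 4 \<Rightarrow> 'a" where
  "minor2 p q m n = p$m * q$n - p$n * q$m"

definition minor3 :: "'a::comm_ring_1^4 \<Rightarrow> 'a^4 \<Rightarrow> 'a^4 \<Rightarrow> 4 \<Rightarrow> 4 \<Rightarrow> 4 \<Rightarrow> 'a" where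
  "minor3 y z w a b c =
     y$a * (z$b * w$c - z$c * w$b) - y$b * (z$a * w$c - z$c * w$a) + y$c * (z$a * w$b - z$b * w$a)"

definition det4 :: "'a::comm_ring_1^4 \<Rightarrow> 'a^4 \<Rightarrow> 'a^4 \<Rightarrow> 'a^4 \<Rightarrow> 'a" where
  "det4 x y z w =
     x$1 * minor3 y z w 2 3 4 - x$2 * minor3 y z w 1 3 4 +
     x$3 * minor3 y z w 1 2 4 - x$4 * minor3 y z w 1 2 3"

lemma det4_swap12: "det4 y x z w = - det4 x y z w"
  unfolding det4_def minor3_def by (simp add: algebra_simps)

lemma det4_swap23: "det4 x z y w = - det4 x y z w"
  unfolding det4_def minor3_def by (simp add: algebra_simps)

lemma det4_swap34: "det4 x y w z = - det4 x y z w"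
  unfolding det4_def minor3_def by (simp add: algebra_simps)

lemma det4_rotate: "det4 w x y z = - det4 x y z w"
  using det4_swap12[of w x y z] det4_swap23[of x w y z] det4_swap34[of x y w z] by simp

lemma det4_ne0_swap12: "det4 y x z w \<noteq> 0 \<longleftrightarrow> det4 x y z w \<noteq> 0"
  using det4_swap12[of y x z w] by auto

lemma det4_ne0_swap23: "det4 x z y w \<noteq> 0 \<longleftrightarrow> det4 x y z w \<noteq> 0"
  using det4_swap23[of x z y w] by auto

lemma det4_ne0_swap34: "det4 x y w z \<noteq> 0 \<longleftrightarrow> det4 x y z w \<noteq> 0"
  using det4_swap34[of x y w z] by auto

lemma det4_same_rows12: "det4 x x z w = 0"
  unfolding det4_def minor3_def by (simp add: algebra_simps)

lemma det4_same_rows13: "det4 x y x w = 0"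
  unfolding det4_def minor3_def by (simp add: algebra_simps)

lemma det4_same_rows14: "det4 x y z x = 0"
  unfolding det4_def minor3_def by (simp add: algebra_simps)

lemma det4_same_rows23: "det4 x y y w = 0"
  unfolding det4_def minor3_def by (simp add: algebra_simps)

lemma det4_same_rows24: "det4 x y z y = 0"
  unfolding det4_def minor3_def by (simp add: algebra_simps)

lemma det4_same_rows34: "det4 x y z z = 0"
  unfolding det4_def minor3_def by (simp add: algebra_simps)

lemma det4_ne0_distinct:
  assumes "det4 x y z w \<noteq> 0"
  shows "distinct [x,y,z,w]"
  using assms det4_same_rows12[of x z w] det4_same_rows13[of x y w] det4_same_rows14[of x y z]
    det4_same_rows23[of x y w] det4_same_rows24[of x y z] det4_same_rows34[of x y z] by auto

lemma det4_sub_first_row: "det4 p (q - p) r w = det4 p q r w"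
  by (simp add: det4_def minor3_def algebra_simps)

lemma det4_sub_first_row2: "det4 p (q - p) (r - p) w = det4 p q r w"
  by (simp add: det4_def minor3_def algebra_simps)

lemma det4_lincomb_row1:
  "det4 (a *\<^sub>R x + b *\<^sub>R y + c *\<^sub>R z + d *\<^sub>R w) y z w = a * det4 x y z (w::real^4)"
  by (simp add: det4_def minor3_def algebra_simps)

lemma det4_lincomb_row2:
  "det4 x (a *\<^sub>R x + b *\<^sub>R y + c *\<^sub>R z + d *\<^sub>R w) z w = b * det4 x y z (w::real^4)"
  by (simp add: det4_def minor3_def algebra_simps)

lemma det4_lincomb_row3:
  "det4 x y (a *\<^sub>R x + b *\<^sub>R y + c *\<^sub>R z + d *\<^sub>R w) w = c * det4 x y z (w::real^4)"
  by (simp add: det4_def minor3_def algebra_simps)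

lemma det4_lincomb_row4:
  "det4 x y z (a *\<^sub>R x + b *\<^sub>R y + c *\<^sub>R z + d *\<^sub>R w) = d * det4 x y z (w::real^4)"
  by (simp add: det4_def minor3_def algebra_simps)

lemma det4_ne0_affine_independent:
  assumes "det4 x y z w \<noteq> 0"
  shows "\<not> affine_dependent {x, y, z, w :: real^4}"
proof
  assume "affine_dependent {x, y, z, w}"
  moreover have "distinct [x,y,z,w]" by (rule det4_ne0_distinct[OF assms])
  ultimately obtain U where U: "U x \<noteq> 0 \<or> U y \<noteq> 0 \<or> U z \<noteq> 0 \<or> U w \<noteq> 0"
    and sum: "U x *\<^sub>R x + U y *\<^sub>R y + U z *\<^sub>R z + U w *\<^sub>R w = 0"
    by (auto simp: affine_dependent_explicit_finite algebra_simps)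
  have "U x = 0" using det4_lincomb_row1[of "U x" x "U y" y "U z" z "U w" w] sum assms
    by (simp add: det4_def minor3_def)
  moreover have "U y = 0" using det4_lincomb_row2[of x "U x" "U y" y "U z" z "U w" w] sum assms
    by (simp add: det4_def minor3_def)
  moreover have "U z = 0" using det4_lincomb_row3[of x y "U x" "U y" "U z" z "U w" w] sum assms
    by (simp add: det4_def minor3_def)
  moreover have "U w = 0" using det4_lincomb_row4[of x y z "U x" "U y" "U z" "U w" w] sum assms
    by (simp add: det4_def minor3_def)
  ultimately show False using U by simp
qed

lemma det4_rvec: "det4 (rvec x) (rvec y) (rvec z) (rvec w) = real_of_int (det4 x y z w)"
  unfolding det4_def minor3_def rvec_nth by (simp only: of_int_mult of_int_diff of_int_add)

definition vec_upd :: "'a^4 \<Rightarrow> 4 \<Rightarrow> 'a \<Rightarrow> 'a^4" where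
  "vec_upd x k c = (\<chi> i. if i = k then c else x $ i)"

lemma det4_cramer:
  "det4 (vec_upd x1 k (dot4 f x1)) (vec_upd x2 k (dot4 f x2)) (vec_upd x3 k (dot4 f x3))
     (vec_upd x4 k (dot4 f x4)) = f$k * det4 x1 x2 x3 x4"
  using exhaust_4[of k]
  by (elim disjE) (simp_all add: det4_def minor3_def vec_upd_def dot4_def algebra_simps)

lemma det4_zero_column:
  "det4 (vec_upd x1 k 0) (vec_upd x2 k 0) (vec_upd x3 k 0) (vec_upd x4 k 0) = 0"
  using exhaust_4[of k] by (elim disjE) (simp_all add: det4_def minor3_def vec_upd_def)

lemma det4_axis_vec_upd:
  "det4 (axis k 1) (vec_upd y k v1) (vec_upd z k v2) (vec_upd w k v3) = det4 (axis k 1) y z w"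
  using exhaust_4[of k] by (elim disjE) (simp_all add: det4_def minor3_def axis_def vec_upd_def)

lemma det4_linear_last_row: "det4 p q r w = dot4 (\<chi> k. det4 p q r (axis k 1)) w"
  by (simp add: det4_def minor3_def dot4_def axis_def algebra_simps)

lemma covector_eq0_if_vanishes_on_basis:
  fixes x1 :: "'a::idom^4"
  assumes "det4 x1 x2 x3 x4 \<noteq> 0"
    and "dot4 f x1 = 0" "dot4 f x2 = 0" "dot4 f x3 = 0" "dot4 f x4 = 0"
  shows "f = 0"
proof -
  have "f$k = 0" for k
    using det4_cramer[of x1 k f x2 x3 x4] assms det4_zero_column[of x1 k x2 x3 x4] by simp
  then show ?thesis by (simp add: vec_eq_iff)
qed

lemma det4_eq0_if_vanishes_on_basis:
  fixes x1 :: "'a::idom^4"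
  assumes "det4 x1 x2 x3 x4 \<noteq> 0"
    and "det4 p q r x1 = 0" "det4 p q r x2 = 0" "det4 p q r x3 = 0" "det4 p q r x4 = 0"
  shows "det4 p q r w = 0"
proof -
  let ?f = "(\<chi> k. det4 p q r (axis k 1)) :: 'a^4"
  have "?f = 0"
    by (rule covector_eq0_if_vanishes_on_basis[OF assms(1)])
      (use assms(2-5) det4_linear_last_row in metis)+
  then show ?thesis using det4_linear_last_row[of p q r w] by (simp add: dot4_def)
qed

lemma det4_factor_column:
  assumes "y$m = 0" "z$m = 0" "w$m = 0"
  shows "det4 x y z w = x$m * det4 (axis m 1) y z w"
  using exhaust_4[of m] assms
  by (elim disjE) (simp_all add: det4_def minor3_def axis_def algebra_simps)

lemma det4_ne0_change_first:
  fixes x :: "'a::idom^4"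
  assumes "det4 a y z w \<noteq> 0" "y$m = 0" "z$m = 0" "w$m = 0" "x$m \<noteq> 0"
  shows "det4 x y z w \<noteq> 0"
  using det4_factor_column[of y m z w x] det4_factor_column[of y m z w a] assms by auto

lemma det4_two_zero_columns:
  assumes "m \<noteq> m'" "y$m = 0" "z$m = 0" "w$m = 0" "y$m' = 0" "z$m' = 0" "w$m' = 0"
  shows "det4 x y z w = 0"
  using exhaust_4[of m] exhaust_4[of m'] assms
  by (elim disjE) (simp_all add: det4_def minor3_def)

lemma det4_axis_first:
  assumes "distinct [c,a,b,d]"
  shows "det4 (axis c 1) y z w = minor3 y z w a b d \<or> det4 (axis c 1) y z w = - minor3 y z w a b d"
  using exhaust_4[of c] exhaust_4[of a] exhaust_4[of b] exhaust_4[of d] assms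
  by (elim disjE) (simp_all add: det4_def minor3_def axis_def algebra_simps)

lemma det4_axis_axis:
  assumes "distinct [j,c,m,n]"
  shows "det4 (axis j 1) (axis c 1) p q = minor2 p q m n \<or>
    det4 (axis j 1) (axis c 1) p q = - minor2 p q m n"
  using exhaust_4[of c] exhaust_4[of j] exhaust_4[of m] exhaust_4[of n] assms
  by (elim disjE) (simp_all add: det4_def minor3_def axis_def minor2_def algebra_simps)

lemma det4_axis_axis_axis:
  assumes "distinct [j,c,m,n]"
  shows "det4 (axis j 1) (axis c 1) d (axis m 1) = d$n \<or>
    det4 (axis j 1) (axis c 1) d (axis m 1) = - d$n"
  using exhaust_4[of c] exhaust_4[of j] exhaust_4[of m] exhaust_4[of n] assms
  by (elim disjE) (simp_all add: det4_def minor3_def axis_def)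

lemma minor2_eq0_if_det4_vanishes:
  fixes p1 p2 z :: "'a::comm_ring_1^4"
  assumes c: "p1$c = 1" "p2$c = 1" "z$c = 0" and vanish: "\<And>w. det4 p1 p2 z w = 0"
    and d: "distinct [k,c,m,n]"
  shows "minor2 (p2 - p1) z m n = 0"
proof -
  let ?d = "p2 - p1"
  have "det4 p1 ?d z (axis k 1) = p1$c * det4 (axis c 1) ?d z (axis k 1)"
    by (rule det4_factor_column) (use c d in \<open>auto simp: axis_def\<close>)
  moreover have "det4 (axis k 1) (axis c 1) ?d z = - det4 (axis c 1) ?d z (axis k 1)"
    by (rule det4_rotate)
  ultimately have "det4 (axis k 1) (axis c 1) ?d z = 0"
    using vanish[of "axis k 1"] det4_sub_first_row[of p1 p2 z "axis k 1"] c by simp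
  then show ?thesis using det4_axis_axis[OF d, of ?d z] by auto
qed

lemma det4_two_top_two_bottom:
  assumes d: "distinct [c,j,m,l]" and c: "P$c = 1" "Q$c = 1" "Z$c = 0" "W$c = 0"
  shows "det4 P Q Z W = minor3 (Q - P) Z W j m l \<or> det4 P Q Z W = - minor3 (Q - P) Z W j m l"
proof -
  have "det4 P Q Z W = det4 P (Q - P) Z W" using det4_sub_first_row[of P Q Z W] by simp
  also have "\<dots> = P$c * det4 (axis c 1) (Q - P) Z W" by (rule det4_factor_column) (use c in auto)
  also have "\<dots> = det4 (axis c 1) (Q - P) Z W" using c by simp
  finally show ?thesis using det4_axis_first[OF d, of "Q - P" Z W] by auto
qed

text \<open>Linear independence of three vectors, expressed by a non-zero 3x3 minor.\<close>

definition indep3 :: "'a::comm_ring_1^4 \<Rightarrow> 'a^4 \<Rightarrow> 'a^4 \<Rightarrow> bool" where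
  "indep3 p q r \<longleftrightarrow> (\<exists>k. det4 (axis k 1) p q r \<noteq> 0)"

lemma det4_eq0_if_not_indep3: assumes "\<not> indep3 p q r" shows "det4 p q r w = 0"
proof -
  have "(\<chi> k. det4 p q r (axis k 1)) = 0"
    using assms det4_rotate[of "axis _ 1" p q r] unfolding indep3_def by (simp add: vec_eq_iff)
  then show ?thesis using det4_linear_last_row[of p q r w] by (simp add: dot4_def)
qed

lemma indep3I:
  fixes p q r :: "'a::idom^4"
  assumes cj: "c \<noteq> j"
    and c: "p$c \<noteq> 0" "q$c = p$c" "r$c = p$c" and j: "q$j = p$j" "r$j \<noteq> p$j" and pq: "p \<noteq> q"
  shows "indep3 p q r"
proof (rule ccontr)
  assume nc: "\<not> indep3 p q r"
  obtain m n where d: "distinct [c,j,m,n]" using distinct2_extend[OF cj] by blast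
  let ?d = "q - p" and ?e = "r - p"
  have A: "det4 p ?d ?e w = 0" for w
    using det4_eq0_if_not_indep3[OF nc, of w] det4_sub_first_row2[of p q r w] by simp
  have key2: "?d$n' = 0" if "distinct [j,c,m',n']" for m' n'
  proof -
    have "det4 p ?d ?e (axis m' 1) = p$c * det4 (axis c 1) ?d ?e (axis m' 1)"
      by (rule det4_factor_column) (use c that in \<open>auto simp: axis_def\<close>)
    moreover have "det4 (axis c 1) ?d ?e (axis m' 1) = det4 ?e (axis c 1) ?d (axis m' 1)"
      using det4_swap12[of "axis c 1" ?e ?d "axis m' 1"]
        det4_swap23[of "axis c 1" ?d ?e "axis m' 1"] by simp
    moreover have
      "det4 ?e (axis c 1) ?d (axis m' 1) = ?e$j * det4 (axis j 1) (axis c 1) ?d (axis m' 1)"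
      by (rule det4_factor_column) (use j cj that in \<open>auto simp: axis_def\<close>)
    ultimately have "p$c * (?e$j * det4 (axis j 1) (axis c 1) ?d (axis m' 1)) = 0"
      using A[of "axis m' 1"] by simp
    then have "det4 (axis j 1) (axis c 1) ?d (axis m' 1) = 0" using c j by simp
    then show ?thesis using det4_axis_axis_axis[OF that, of ?d] by auto
  qed
  have "?d$n = 0" by (rule key2[of m]) (use d in auto)
  moreover have "?d$m = 0" by (rule key2[of n]) (use d in auto)
  moreover have "?d$c = 0" "?d$j = 0" using c j by simp_all
  ultimately have "?d$i = 0" for i using distinct4_cases[OF d, of i] by auto
  then have "q = p" by (simp add: vec_eq_iff)
  then show False using pq by simp
qed

lemma indep3_distinct: assumes "indep3 p q r" shows "p \<noteq> q \<and> p \<noteq> r \<and> q \<noteq> r"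
proof -
  obtain k where "det4 (axis k 1) p q r \<noteq> 0" using assms unfolding indep3_def by blast
  then show ?thesis
    using det4_same_rows23[of "axis k 1" p r] det4_same_rows24[of "axis k 1" p q]
      det4_same_rows34[of "axis k 1" p q] by auto
qed

lemma parallel_eq0_if_orthogonal:
  fixes da db dc za zb zc aa ab ac bb :: real
  assumes "da * zb = db * za" "da * zc = dc * za" "db * zc = dc * zb"
    and "aa * da + ab * db + ac * dc = 0" and "aa * za + ab * zb + ac * zc = bb" and "bb \<noteq> 0"
  shows "da = 0 \<and> db = 0 \<and> dc = 0"
proof -
  have "da * bb = za * (aa * da + ab * db + ac * dc)"
    using assms(1,2,5) by (auto simp: algebra_simps)
  moreover have "db * bb = zb * (aa * da + ab * db + ac * dc)"
    using assms(1,3,5) by (auto simp: algebra_simps)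
  moreover have "dc * bb = zc * (aa * da + ab * db + ac * dc)"
    using assms(2,3,5) by (auto simp: algebra_simps)
  ultimately have "da * bb = 0" "db * bb = 0" "dc * bb = 0"
    unfolding assms(4) by simp_all
  then show ?thesis using assms(6) by simp
qed

text \<open>Sorted by the first coordinate, three pairwise incomparable pairs are strictly decreasing
  in the second one, so the middle pair separates the outer two in both coordinates.\<close>

lemma incomparable_triple_no_unit_swaps:
  fixes xk xl yk yl wk wl :: int
  assumes "\<not> (xk \<le> yk \<and> xl \<le> yl)" "\<not> (yk \<le> xk \<and> yl \<le> xl)"
    and "\<not> (xk \<le> wk \<and> xl \<le> wl)" "\<not> (wk \<le> xk \<and> wl \<le> xl)"
    and "\<not> (yk \<le> wk \<and> yl \<le> wl)" "\<not> (wk \<le> yk \<and> wl \<le> yl)"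
    and "(xk = 0 \<and> yk = 1) \<or> (xk = 1 \<and> yk = 0) \<or> (xl = 0 \<and> yl = 1) \<or> (xl = 1 \<and> yl = 0)"
    and "(xk = 0 \<and> wk = 1) \<or> (xk = 1 \<and> wk = 0) \<or> (xl = 0 \<and> wl = 1) \<or> (xl = 1 \<and> wl = 0)"
    and "(yk = 0 \<and> wk = 1) \<or> (yk = 1 \<and> wk = 0) \<or> (yl = 0 \<and> wl = 1) \<or> (yl = 1 \<and> wl = 0)"
  shows False
  using assms by smt

lemma cross_polytope_arith:
  fixes A B C D E F :: int
  assumes pos: "A \<ge> 1" "B \<ge> 1" and s1: "A + B = C + D" and s2: "A + B = E + F"
    and q1: "B * C = A * D" and q2: "B * F = A * E" and q3: "C * F = D * E"
  shows "A = B \<and> C = A \<and> D = A \<and> E = A \<and> F = A"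
proof -
  have "C * (A + B) = A * (A + B)" using q1 s1 by algebra
  then have cA: "C = A" using pos by simp
  have dB: "D = B" using s1 cA by simp
  have "E * (A + B) = B * (A + B)" using q2 s2 by algebra
  then have eB: "E = B" using pos by simp
  have fA: "F = A" using s2 eB by simp
  have "A * A = B * B" using q3 cA dB eB fA by (simp add: mult.commute)
  then have "(A - B) * (A + B) = 0" by algebra
  then have "A = B" using pos by simp
  then show ?thesis using cA dB eB fA by simp
qed

lemma affine_hull_hyperplane_vanishing:
  fixes a f v :: "'a::real_inner"
  assumes "affine hull S = {x. a \<bullet> x = b}" "\<And>x. x \<in> S \<Longrightarrow> f \<bullet> x = 0" "a \<bullet> v = b"
  shows "f \<bullet> v = 0"
proof -
  have "affine hull S \<subseteq> {x. f \<bullet> x = 0}"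
    using assms(2) by (intro hull_minimal) (auto intro: affine_hyperplane)
  then show ?thesis using assms(1,3) by auto
qed

abbreviation B_facet_classified :: "(int^4) set \<Rightarrow> bool" where
  "B_facet_classified \<tau> \<equiv> B1_facet \<tau> \<or> B2_facet \<tau> \<or> flat_border \<tau> \<or> \<tau> = std_cross_polytope"

lemma classified_B1I:
  assumes "a \<in> \<tau>" "a$c = 1" "\<And>x. x \<in> \<tau> \<Longrightarrow> x$c \<noteq> 0 \<Longrightarrow> x = a"
  shows "B_facet_classified \<tau>"
proof -
  have "{x\<in>\<tau>. x$c \<noteq> 0} = {a}"
  proof
    show "{x\<in>\<tau>. x$c \<noteq> 0} \<subseteq> {a}" using assms(3) by blast
    show "{a} \<subseteq> {x\<in>\<tau>. x$c \<noteq> 0}" using assms(1,2) by simp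
  qed
  moreover have "\<forall>x\<in>\<tau>. x$c \<noteq> 0 \<longrightarrow> x$c = 1" using assms(2,3) by metis
  ultimately have "B1_facet \<tau>" unfolding B1_facet_def by (intro exI[of _ c]) simp
  then show ?thesis by blast
qed

lemma classified_B2I:
  assumes "j \<noteq> c" "\<And>x. x \<in> \<tau> \<Longrightarrow> (x$c, x$j) \<in> {(0,0),(1,0),(0,1)}"
  shows "B_facet_classified \<tau>"
  using assms unfolding B2_facet_def by metis

lemma classified_flat_borderI:
  assumes "c \<noteq> j" "C$c = 1" "C$j = 1" "A \<noteq> B" "A$c = 0" "A$j = 0" "B$c = 0" "B$j = 0"
    and "C \<in> \<tau>" "A \<in> \<tau>" "B \<in> \<tau>" "\<And>x. x \<in> \<tau> \<Longrightarrow> x \<noteq> C \<Longrightarrow> x$c = 0 \<or> x$j = 0"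
  shows "B_facet_classified \<tau>"
proof -
  have "\<exists>A B. A \<in> \<tau> \<and> B \<in> \<tau> \<and> A \<noteq> B \<and> A$c = 0 \<and> A$j = 0 \<and> B$c = 0 \<and> B$j = 0"
    using assms(4-8,10,11) by blast
  moreover have "\<forall>x\<in>\<tau>. x \<noteq> C \<longrightarrow> x$c = 0 \<or> x$j = 0" using assms(12) by blast
  ultimately have "flat_border \<tau>" unfolding flat_border_def using assms(1-3,9) by blast
  then show ?thesis by blast
qed

lemma mem_std_cross_polytope:
  "x \<in> std_cross_polytope \<longleftrightarrow> (\<forall>n. x$n = 0 \<or> x$n = 1) \<and> x$1 + x$2 + x$3 + x$4 = 2"
proof
  assume "x \<in> std_cross_polytope"
  then show "(\<forall>n. x$n = 0 \<or> x$n = 1) \<and> x$1 + x$2 + x$3 + x$4 = 2"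
    unfolding std_cross_polytope_def by (auto simp: forall_4)
next
  assume h: "(\<forall>n. x$n = 0 \<or> x$n = 1) \<and> x$1 + x$2 + x$3 + x$4 = 2"
  have v: "x = vector [x$1, x$2, x$3, x$4]" by (simp add: vec_eq_iff forall_4)
  have "x$1 = 0 \<or> x$1 = 1" "x$2 = 0 \<or> x$2 = 1" "x$3 = 0 \<or> x$3 = 1" "x$4 = 0 \<or> x$4 = 1"
    using h by auto
  then show "x \<in> std_cross_polytope" unfolding std_cross_polytope_def using h
    by (subst v, elim disjE) (simp_all add: vec_eq_iff forall_4)
qed

lemma card_std_cross_polytope: "card std_cross_polytope = 6"
  unfolding std_cross_polytope_def by (simp add: vec_eq_iff forall_4)

section \<open>Facets with the B-simplex property in coordinates\<close>

definition unit_coordinate :: "int^4 \<Rightarrow> int^4 \<Rightarrow> int^4 \<Rightarrow> int^4 \<Rightarrow> bool" where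
  "unit_coordinate x y z w \<longleftrightarrow> (\<exists>m.
     (x$m = 1 \<and> y$m = 0 \<and> z$m = 0 \<and> w$m = 0) \<or> (x$m = 0 \<and> y$m = 1 \<and> z$m = 0 \<and> w$m = 0) \<or>
     (x$m = 0 \<and> y$m = 0 \<and> z$m = 1 \<and> w$m = 0) \<or> (x$m = 0 \<and> y$m = 0 \<and> z$m = 0 \<and> w$m = 1))"

locale B_facet4 =
  fixes T :: "(int^4) set" and \<alpha> :: "real^4" and \<beta> :: real
  assumes finite_T: "finite T"
  and nonneg: "\<And>x i. x \<in> T \<Longrightarrow> 0 \<le> x$i"
  and normal_pos: "\<And>k. 0 < \<alpha>$k"
  and offset_pos: "0 < \<beta>"
  and on_hyperplane: "\<And>x. x \<in> T \<Longrightarrow> dot4 \<alpha> (rvec x) = \<beta>"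
  and spanning: "\<And>f. (\<And>x. x \<in> T \<Longrightarrow> dot4 f (rvec x) = 0) \<Longrightarrow> f = 0"
  and unit_coordinate_if_det4_ne0: "\<And>x y z w. x \<in> T \<Longrightarrow> y \<in> T \<Longrightarrow> z \<in> T \<Longrightarrow> w \<in> T \<Longrightarrow>
    det4 x y z w \<noteq> 0 \<Longrightarrow> unit_coordinate x y z w"

lemma B_facet_hyperplane:
  assumes "B_facet \<tau>"
  obtains \<alpha> \<beta> where "\<And>k. 0 < \<alpha>$k" "\<And>x. x \<in> \<tau> \<Longrightarrow> dot4 \<alpha> (rvec x) = \<beta>"
    "\<And>f v. (\<And>x. x \<in> \<tau> \<Longrightarrow> dot4 f (rvec x) = 0) \<Longrightarrow> dot4 \<alpha> v = \<beta> \<Longrightarrow> dot4 f v = 0"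
proof -
  obtain \<alpha> \<beta> where pos: "\<And>k. 0 < \<alpha>$k" and hull: "affine hull (rvec ` \<tau>) = {x. \<alpha> \<bullet> x = \<beta>}"
    using assms unfolding B_facet_def by blast
  have "dot4 \<alpha> (rvec x) = \<beta>" if "x \<in> \<tau>" for x
    using hull hull_inc[of "rvec x" "rvec ` \<tau>"] that by (auto simp: inner_eq_dot4)
  moreover have "dot4 f v = 0" if "\<And>x. x \<in> \<tau> \<Longrightarrow> dot4 f (rvec x) = 0" "dot4 \<alpha> v = \<beta>" for f v
    using affine_hull_hyperplane_vanishing[OF hull, of f v] that by (auto simp: inner_eq_dot4)
  ultimately show ?thesis using that pos by blast
qed

text \<open>The covector e_1 does not vanish on the hyperplane, so some point of the facet has
  x_1 > 0, and then \<beta> \<ge> \<alpha>_1 x_1 > 0.\<close>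

lemma B_facet_offset_pos:
  assumes nonneg: "\<And>x i. x \<in> \<tau> \<Longrightarrow> 0 \<le> x$i" and pos: "\<And>k. 0 < \<alpha>$k"
    and on: "\<And>x. x \<in> \<tau> \<Longrightarrow> dot4 \<alpha> (rvec x) = \<beta>"
    and vanish: "\<And>f v. (\<And>x. x \<in> \<tau> \<Longrightarrow> dot4 f (rvec x) = 0) \<Longrightarrow> dot4 \<alpha> v = \<beta> \<Longrightarrow> dot4 f v = 0"
  shows "0 < \<beta>"
proof -
  have "\<exists>x\<in>\<tau>. x$1 \<noteq> 0"
  proof (rule ccontr)
    assume "\<not> ?thesis"
    then have vanish1: "dot4 (axis 1 1) v = 0" if "dot4 \<alpha> v = \<beta>" for v
      using vanish[of "axis 1 1" v] that by (auto simp: dot4_def axis_def)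
    let ?v = "(\<beta> / \<alpha>$1) *\<^sub>R axis 1 1 :: real^4"
    let ?d = "\<alpha>$2 *\<^sub>R axis 1 1 - \<alpha>$1 *\<^sub>R axis 2 1 :: real^4"
    have "dot4 \<alpha> ?v = \<beta>" "dot4 \<alpha> (?v + ?d) = \<beta>"
      using pos[of 1] by (simp_all add: dot4_def axis_def algebra_simps)
    then have "dot4 (axis 1 1) ?v = 0" "dot4 (axis 1 1) (?v + ?d) = 0" using vanish1 by blast+
    then show False using pos[of 1] pos[of 2] by (simp add: dot4_def axis_def)
  qed
  then obtain x where x: "x \<in> \<tau>" "x$1 \<noteq> 0" by blast
  have terms: "0 \<le> \<alpha>$k * real_of_int (x$k)" for k using pos[of k] nonneg[OF x(1), of k] by simp
  have "0 < \<alpha>$1 * real_of_int (x$1)" using pos[of 1] nonneg[OF x(1), of 1] x(2) by simp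
  also have "\<dots> \<le> \<beta>" using on[OF x(1)] terms[of 2] terms[of 3] terms[of 4] by (simp add: dot4_def)
  finally show ?thesis .
qed

lemma B_facet_spanning:
  fixes \<alpha> f :: "real^4"
  assumes pos: "\<And>k. 0 < \<alpha>$k" and "0 < \<beta>"
    and vanish: "\<And>v. dot4 \<alpha> v = \<beta> \<Longrightarrow> dot4 f v = 0"
  shows "f = 0"
proof -
  have "f$k = 0" for k
  proof -
    have "dot4 f ((\<beta> / \<alpha>$k) *\<^sub>R axis k 1) = 0"
      by (rule vanish) (use pos[of k] in \<open>simp add: dot4_scaleR_axis\<close>)
    then show ?thesis using assms(2) pos[of k] by (simp add: dot4_scaleR_axis)
  qed
  then show ?thesis by (simp add: vec_eq_iff)
qed

lemma B_facet_unit_coordinate: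
  assumes "B_facet \<tau>" "x \<in> \<tau>" "y \<in> \<tau>" "z \<in> \<tau>" "w \<in> \<tau>" "det4 x y z w \<noteq> 0"
  shows "unit_coordinate x y z w"
proof -
  let ?S = "{x,y,z,w}"
  have dst: "distinct [x,y,z,w]" by (rule det4_ne0_distinct[OF assms(6)])
  have "det4 (rvec x) (rvec y) (rvec z) (rvec w) \<noteq> 0" using assms(6) det4_rvec by simp
  then have "\<not> affine_dependent (rvec ` ?S)" by (simp add: det4_ne0_affine_independent)
  moreover have "card ?S = 4" using dst by simp
  ultimately have "is_simplex 3 ?S" unfolding is_simplex_def by simp
  then have simplex: "is_simplex (CARD(4) - 1) ?S" by simp
  have "\<forall>S\<subseteq>\<tau>. is_simplex (CARD(4) - 1) S \<longrightarrow> B_simplex S"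
    using assms(1) unfolding B_facet_def by (elim conjE)
  moreover have "?S \<subseteq> \<tau>" using assms(2-5) by simp
  ultimately have "B_simplex ?S" using simplex by simp
  then obtain k i where k: "is_simplex k ?S" and zeros: "card {v\<in>?S. v$i = 0} = k"
    and ones: "\<forall>v\<in>?S. v$i \<noteq> 0 \<longrightarrow> v$i = 1"
    unfolding B_simplex_def by blast
  have "k = 3" using k dst unfolding is_simplex_def by simp
  then have "of_bool (x$i = 0) + of_bool (y$i = 0) + of_bool (z$i = 0) + of_bool (w$i = 0) =
      (3::nat)"
    using zeros card_filter_distinct4[OF dst, of "\<lambda>v. v$i = 0"] by simp
  moreover have "x$i \<noteq> 0 \<Longrightarrow> x$i = 1" "y$i \<noteq> 0 \<Longrightarrow> y$i = 1" "z$i \<noteq> 0 \<Longrightarrow> z$i = 1"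
    "w$i \<noteq> 0 \<Longrightarrow> w$i = 1"
    using ones by auto
  ultimately show ?thesis unfolding unit_coordinate_def
    by (intro exI[of _ i])
      (cases "x$i = 0"; cases "y$i = 0"; cases "z$i = 0"; cases "w$i = 0"; simp)
qed

lemma B_facet4_if_B_facet:
  assumes "B_facet \<tau>"
  obtains \<alpha> \<beta> where "B_facet4 \<tau> \<alpha> \<beta>"
proof -
  obtain \<alpha> \<beta> where pos: "\<And>k. 0 < \<alpha>$k" and on: "\<And>x. x \<in> \<tau> \<Longrightarrow> dot4 \<alpha> (rvec x) = \<beta>"
    and vanish: "\<And>f v. (\<And>x. x \<in> \<tau> \<Longrightarrow> dot4 f (rvec x) = 0) \<Longrightarrow> dot4 \<alpha> v = \<beta> \<Longrightarrow> dot4 f v = 0"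
    using B_facet_hyperplane[OF assms] by blast
  have nonneg: "\<And>x i. x \<in> \<tau> \<Longrightarrow> 0 \<le> x$i" using assms unfolding B_facet_def nonneg_pts_def by blast
  have "0 < \<beta>" by (rule B_facet_offset_pos[OF nonneg pos on vanish])
  have "B_facet4 \<tau> \<alpha> \<beta>"
  proof
    show "finite \<tau>" using assms unfolding B_facet_def by blast
    show "\<And>f. (\<And>x. x \<in> \<tau> \<Longrightarrow> dot4 f (rvec x) = 0) \<Longrightarrow> f = 0"
      using B_facet_spanning[OF pos \<open>0 < \<beta>\<close>] vanish by blast
  qed (use nonneg pos on \<open>0 < \<beta>\<close> B_facet_unit_coordinate[OF assms] in auto)
  then show ?thesis by (rule that)
qed

context B_facet4
begin

lemma det4_eq0_if_no_unit_coordinate: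
  "x \<in> T \<Longrightarrow> y \<in> T \<Longrightarrow> z \<in> T \<Longrightarrow> w \<in> T \<Longrightarrow> \<not> unit_coordinate x y z w \<Longrightarrow> det4 x y z w = 0"
  using unit_coordinate_if_det4_ne0 by blast

lemma on_hyperplane_perm: "x \<in> T \<Longrightarrow> distinct [i,j,k,l] \<Longrightarrow> \<alpha>$i*x$i + \<alpha>$j*x$j + \<alpha>$k*x$k + \<alpha>$l*x$l = \<beta>"
  using on_hyperplane[of x] dot4_perm[of i j k l \<alpha> "rvec x"] by simp

lemma eq_if_agree_but_one: assumes "x \<in> T" "y \<in> T" "\<And>n. n \<noteq> m \<Longrightarrow> x$n = y$n" shows "x = y"
proof -
  have e: "dot4 \<alpha> (rvec x) = dot4 \<alpha> (rvec y)" using on_hyperplane assms by simp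
  have "x$m = y$m"
    using exhaust_4[of m] e assms(3)[of 1] assms(3)[of 2] assms(3)[of 3] assms(3)[of 4]
      normal_pos[of m]
    by (elim disjE) (simp_all add: dot4_def)
  then show ?thesis using assms(3) by (metis vec_eq_iff)
qed

lemma eq_if_agree3:
  assumes "x \<in> T" "y \<in> T" "distinct [i,j,k]" "x$i = y$i" "x$j = y$j" "x$k = y$k"
  shows "x = y"
proof -
  obtain l where l: "distinct [i,j,k,l]" using distinct3_extend[OF assms(3)] by blast
  show ?thesis
  proof (rule eq_if_agree_but_one[OF assms(1,2), of l])
    fix n assume "n \<noteq> l"
    then have "n = i \<or> n = j \<or> n = k" using distinct4_cases[OF l, of n] by blast
    then show "x$n = y$n" using assms(4-6) by blast
  qed
qed

lemma eq_if_le: assumes "x \<in> T" "y \<in> T" "\<And>n. x$n \<le> y$n" shows "x = y"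
proof -
  have e: "dot4 \<alpha> (rvec x) = dot4 \<alpha> (rvec y)" using on_hyperplane assms by simp
  have p: "\<alpha>$n * x$n \<le> \<alpha>$n * y$n" for n using normal_pos[of n] assms(3)[of n] by simp
  have s: "\<alpha>$1*x$1 + \<alpha>$2*x$2 + \<alpha>$3*x$3 + \<alpha>$4*x$4 = \<alpha>$1*y$1 + \<alpha>$2*y$2 + \<alpha>$3*y$3 + \<alpha>$4*y$4"
    using e by (simp add: dot4_def)
  have q: "\<alpha>$1*x$1 = \<alpha>$1*y$1" "\<alpha>$2*x$2 = \<alpha>$2*y$2" "\<alpha>$3*x$3 = \<alpha>$3*y$3" "\<alpha>$4*x$4 = \<alpha>$4*y$4"
    using s p[of 1] p[of 2] p[of 3] p[of 4] by linarith+
  have "x$n = y$n" for n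
  proof -
    have "\<alpha>$n * x$n = \<alpha>$n * y$n" using exhaust_4[of n] q by (elim disjE) simp_all
    then show ?thesis using normal_pos[of n] by simp
  qed
  then show ?thesis by (simp add: vec_eq_iff)
qed

lemma exists_coord_ne0: assumes "x \<in> T" shows "\<exists>n. x$n \<noteq> 0"
proof (rule ccontr)
  assume "\<not> ?thesis"
  then have "dot4 \<alpha> (rvec x) = 0" by (simp add: dot4_def)
  then show False using on_hyperplane[OF assms] offset_pos by simp
qed

lemma coord_ge2: "x \<in> T \<Longrightarrow> x$i \<noteq> 0 \<Longrightarrow> x$i \<noteq> 1 \<Longrightarrow> x$i \<ge> 2"
  using nonneg[of x i] by linarith

section \<open>The existence of a pyramid\<close>

definition coord01 :: "4 \<Rightarrow> bool" where "coord01 c \<longleftrightarrow> (\<forall>x\<in>T. x$c = 0 \<or> x$c = 1)"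

definition pyramid :: "4 \<Rightarrow> int^4 \<Rightarrow> int^4 \<Rightarrow> int^4 \<Rightarrow> int^4 \<Rightarrow> bool" where
  "pyramid c a s1 s2 s3 \<longleftrightarrow> a \<in> T \<and> s1 \<in> T \<and> s2 \<in> T \<and> s3 \<in> T \<and> det4 a s1 s2 s3 \<noteq> 0 \<and>
     a$c = 1 \<and> s1$c = 0 \<and> s2$c = 0 \<and> s3$c = 0"

lemma pyramid_base_distinct: assumes "pyramid c a t1 t2 t3" shows "t1 \<noteq> t2" "t1 \<noteq> t3" "t2 \<noteq> t3"
proof -
  have D: "det4 a t1 t2 t3 \<noteq> 0" using assms unfolding pyramid_def by auto
  show "t1 \<noteq> t2" using D det4_same_rows23[of a t1 t3] by auto
  show "t1 \<noteq> t3" using D det4_same_rows24[of a t1 t2] by auto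
  show "t2 \<noteq> t3" using D det4_same_rows34[of a t1 t2] by auto
qed

lemma pyramid_base_coord_ne0:
  assumes C: "pyramid c a t1 t2 t3" and jc: "j \<noteq> c"
  obtains t where "t \<in> T" "t$c = 0" "t$j \<noteq> 0" "t \<in> {t1,t2,t3}"
proof -
  from C have CT: "t1 \<in> T" "t2 \<in> T" "t3 \<in> T" and D: "det4 a t1 t2 t3 \<noteq> 0"
    and t: "t1$c = 0" "t2$c = 0" "t3$c = 0" unfolding pyramid_def by auto
  have "\<not> (t1$j = 0 \<and> t2$j = 0 \<and> t3$j = 0)"
  proof
    assume h: "t1$j = 0 \<and> t2$j = 0 \<and> t3$j = 0"
    have "det4 a t1 t2 t3 = 0" by (rule det4_two_zero_columns[of c j]) (use jc t h in auto)
    then show False using D by simp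
  qed
  then show ?thesis using that CT t by blast
qed

lemma spanning_int:
  assumes "g \<noteq> 0"
  obtains x where "x \<in> T" "dot4 g x \<noteq> 0"
proof -
  have "rvec g \<noteq> 0" using assms by (simp add: vec_eq_iff)
  then show ?thesis using spanning[of "rvec g"] that by (auto simp: dot4_rvec)
qed

lemma exists_minor2_ne0:
  obtains x1 x2 p q where "x1 \<in> T" "x2 \<in> T" "p \<noteq> q" "minor2 x1 x2 p q \<noteq> 0"
proof -
  have "axis 1 1 \<noteq> (0 :: int^4)" by simp
  then obtain x1 where x1: "x1 \<in> T" using spanning_int by blast
  obtain p where p: "x1$p \<noteq> 0" using exists_coord_ne0[OF x1] by blast
  obtain q r s where "distinct [p,q,r,s]" by (rule distinct1_extend)
  then have pq: "p \<noteq> q" by simp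
  let ?g = "x1$p *s axis q 1 - x1$q *s axis p 1 :: int^4"
  have "?g$q \<noteq> 0" using p pq by (simp add: axis_def)
  then have "?g \<noteq> 0" by (metis zero_index)
  then obtain x2 where x2: "x2 \<in> T" "dot4 ?g x2 \<noteq> 0" by (rule spanning_int)
  have "dot4 ?g x2 = minor2 x1 x2 p q"
    using exhaust_4[of p] exhaust_4[of q] pq
    by (elim disjE) (simp_all add: dot4_def axis_def minor2_def algebra_simps)
  then show ?thesis using that[OF x1 x2(1) pq] x2(2) by simp
qed

lemma exists_indep3: obtains x1 x2 x3 where "x1 \<in> T" "x2 \<in> T" "x3 \<in> T" "indep3 x1 x2 x3"
proof -
  obtain x1 x2 p q where x: "x1 \<in> T" "x2 \<in> T" and pq: "p \<noteq> q" and m: "minor2 x1 x2 p q \<noteq> 0"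
    by (rule exists_minor2_ne0)
  obtain r s where "distinct [p,q,r,s]" using distinct2_extend[OF pq] by blast
  then have d: "distinct [r,s,p,q]" by auto
  let ?g = "(\<chi> k. det4 (axis s 1) x1 x2 (axis k 1)) :: int^4"
  have "det4 (axis r 1) (axis s 1) x1 x2 \<noteq> 0" using det4_axis_axis[OF d, of x1 x2] m by auto
  then have "?g$r \<noteq> 0" using det4_rotate[of "axis r 1" "axis s 1" x1 x2] by simp
  then have "?g \<noteq> 0" by (metis zero_index)
  then obtain x3 where x3: "x3 \<in> T" "dot4 ?g x3 \<noteq> 0" by (rule spanning_int)
  then have "det4 (axis s 1) x1 x2 x3 \<noteq> 0" using det4_linear_last_row[of "axis s 1" x1 x2 x3]
    by simp
  then show ?thesis using that x x3 unfolding indep3_def by blast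
qed

lemma exists_det4_ne0:
  obtains x1 x2 x3 x4 where "x1 \<in> T" "x2 \<in> T" "x3 \<in> T" "x4 \<in> T" "det4 x1 x2 x3 x4 \<noteq> 0"
proof -
  obtain x1 x2 x3 where x: "x1 \<in> T" "x2 \<in> T" "x3 \<in> T" and "indep3 x1 x2 x3"
    by (rule exists_indep3)
  then obtain k where "det4 (axis k 1) x1 x2 x3 \<noteq> 0" unfolding indep3_def by blast
  then have "(\<chi> k. det4 x1 x2 x3 (axis k 1)) $ k \<noteq> 0" using det4_rotate[of "axis k 1" x1 x2 x3]
    by simp
  then have "(\<chi> k. det4 x1 x2 x3 (axis k 1)) \<noteq> (0 :: int^4)" by (metis zero_index)
  then obtain x4 where "x4 \<in> T" "dot4 (\<chi> k. det4 x1 x2 x3 (axis k 1)) x4 \<noteq> 0" by (rule spanning_int)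
  then show ?thesis using that x det4_linear_last_row[of x1 x2 x3 x4] by simp
qed

lemma exists_pyramid: "\<exists>i p t1 t2 t3. pyramid i p t1 t2 t3"
proof -
  obtain x1 x2 x3 x4 where X: "x1 \<in> T" "x2 \<in> T" "x3 \<in> T" "x4 \<in> T" and D: "det4 x1 x2 x3 x4 \<noteq> 0"
    using exists_det4_ne0 by blast
  from unit_coordinate_if_det4_ne0[OF X D] obtain m where
    m: "(x1$m = 1 \<and> x2$m = 0 \<and> x3$m = 0 \<and> x4$m = 0) \<or> (x1$m = 0 \<and> x2$m = 1 \<and> x3$m = 0 \<and> x4$m = 0)
     \<or> (x1$m = 0 \<and> x2$m = 0 \<and> x3$m = 1 \<and> x4$m = 0) \<or> (x1$m = 0 \<and> x2$m = 0 \<and> x3$m = 0 \<and> x4$m = 1)"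
    unfolding unit_coordinate_def by blast
  have D2: "det4 x2 x1 x3 x4 \<noteq> 0" using D by (metis det4_ne0_swap12)
  have D3: "det4 x3 x1 x2 x4 \<noteq> 0" using D by (metis det4_ne0_swap12 det4_ne0_swap23)
  have D4: "det4 x4 x1 x2 x3 \<noteq> 0" using D det4_rotate[of x4 x1 x2 x3] by simp
  { assume h: "x1$m = 1 \<and> x2$m = 0 \<and> x3$m = 0 \<and> x4$m = 0"
    have "pyramid m x1 x2 x3 x4" unfolding pyramid_def using X D h by auto }
  moreover
  { assume h: "x1$m = 0 \<and> x2$m = 1 \<and> x3$m = 0 \<and> x4$m = 0"
    have "pyramid m x2 x1 x3 x4" unfolding pyramid_def using X D2 h by auto }
  moreover
  { assume h: "x1$m = 0 \<and> x2$m = 0 \<and> x3$m = 1 \<and> x4$m = 0"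
    have "pyramid m x3 x1 x2 x4" unfolding pyramid_def using X D3 h by auto }
  moreover
  { assume h: "x1$m = 0 \<and> x2$m = 0 \<and> x3$m = 0 \<and> x4$m = 1"
    have "pyramid m x4 x1 x2 x3" unfolding pyramid_def using X D4 h by auto }
  ultimately show ?thesis using m by blast
qed

section \<open>A pyramid over a 0/1-valued coordinate\<close>

lemma not_coord01E:
  assumes "\<not> coord01 c"
  obtains q where "q \<in> T" "q$c \<ge> 2"
  using assms coord_ge2 unfolding coord01_def by blast

lemma not_all_coords0:
  assumes "x \<in> T" "distinct [i,j,k,l]" "x$i = 0" "x$j = 0" "x$k = 0" "x$l = 0"
  shows False
  using exists_coord_ne0[OF assms(1)] distinct4_cases[OF assms(2)] assms(3-6) by metis

text \<open>The descent towards a pyramid over a 0/1-valued coordinate: a point q with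
  q_i \<ge> 2 replaces the apex of a pyramid over i, and the base point carrying the unit
  coordinate j of the new quadruple becomes the apex over j. The two lemmas below are the second
  and the third round; in the third round a point with a value \<ge> 2 would dominate a base
  point.\<close>

lemma coord01_pyramid_descent2:
  assumes d: "distinct [i,j,k]" and T: "q \<in> T" "r \<in> T" "t1 \<in> T" "t2 \<in> T"
    and q: "q$i \<ge> 2" "q$j = 0" "q$k = 0" and r: "r$j \<ge> 2" "r$k = 0"
    and t1: "t1$i = 0" "t1$j = 0" "t1$k = 0" and t2: "t2$i = 0" "t2$j = 0" "t2$k = 1"
    and D: "det4 t2 r q t1 \<noteq> 0"
  shows "\<exists>c a s1 s2 s3. pyramid c a s1 s2 s3 \<and> coord01 c"
proof (rule ccontr)
  assume "\<not> ?thesis"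
  then have "\<not> coord01 k" using T t2 r q t1 D unfolding pyramid_def by blast
  then obtain s where s: "s \<in> T" "s$k \<ge> 2" by (rule not_coord01E)
  have "det4 s r q t1 \<noteq> 0"
    by (rule det4_ne0_change_first[OF D, where m=k]) (use t2 r q t1 s in auto)
  from unit_coordinate_if_det4_ne0[OF s(1) T(2) T(1) T(3) this] obtain m where
    m: "(s$m = 1 \<and> r$m = 0 \<and> q$m = 0 \<and> t1$m = 0) \<or> (s$m = 0 \<and> r$m = 1 \<and> q$m = 0 \<and> t1$m = 0)
     \<or> (s$m = 0 \<and> r$m = 0 \<and> q$m = 1 \<and> t1$m = 0) \<or> (s$m = 0 \<and> r$m = 0 \<and> q$m = 0 \<and> t1$m = 1)"
    unfolding unit_coordinate_def by blast
  have "m \<noteq> i" "m \<noteq> j" "m \<noteq> k" using m q(1) r(1) s(2) t1 by auto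
  then have dm: "distinct [i,j,k,m]" using d by auto
  then have t1m: "t1$m = 1" using m not_all_coords0[OF T(3) dm t1] by auto
  have "t2$m = 0"
  proof (rule ccontr)
    assume "t2$m \<noteq> 0"
    have "t1$n \<le> t2$n" for n
      by (rule le_if_distinct4[OF dm]) (use t1 t2 t1m \<open>t2$m \<noteq> 0\<close> nonneg[OF T(4), of m] in auto)
    then show False using eq_if_le[OF T(3,4)] t1(3) t2(3) by force
  qed
  have "t2$n \<le> s$n" for n
    by (rule le_if_distinct4[OF dm]) (use t2 s \<open>t2$m = 0\<close> nonneg[OF s(1)] in auto)
  then show False using eq_if_le[OF T(4) s(1)] t2(3) s(2) by force
qed

lemma coord01_pyramid_descent1:
  assumes ij: "i \<noteq> j" and T: "q \<in> T" "t1 \<in> T" "t2 \<in> T" "t3 \<in> T"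
    and q: "q$i \<ge> 2" "q$j = 0"
    and t: "t1$i = 0" "t2$i = 0" "t3$i = 0" "t1$j = 0" "t2$j = 0" "t3$j = 1"
    and D: "det4 t3 q t1 t2 \<noteq> 0"
  shows "\<exists>c a s1 s2 s3. pyramid c a s1 s2 s3 \<and> coord01 c"
proof (cases "coord01 j")
  case True
  then show ?thesis using T t q D unfolding pyramid_def by blast
next
  case False
  then obtain r where r: "r \<in> T" "r$j \<ge> 2" by (rule not_coord01E)
  have D2: "det4 r q t1 t2 \<noteq> 0" by (rule det4_ne0_change_first[OF D, where m=j]) (use t q r in auto)
  from unit_coordinate_if_det4_ne0[OF r(1) T(1) T(2) T(3) D2] obtain m where
    m: "(r$m = 1 \<and> q$m = 0 \<and> t1$m = 0 \<and> t2$m = 0) \<or> (r$m = 0 \<and> q$m = 1 \<and> t1$m = 0 \<and> t2$m = 0)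
     \<or> (r$m = 0 \<and> q$m = 0 \<and> t1$m = 1 \<and> t2$m = 0) \<or> (r$m = 0 \<and> q$m = 0 \<and> t1$m = 0 \<and> t2$m = 1)"
    unfolding unit_coordinate_def by blast
  have mj: "m \<noteq> j"
  proof assume "m = j" then have "r$m \<ge> 2" "t1$m = 0" "t2$m = 0" "q$m = 0" using r(2) t q
    by simp_all
    then show False using m by auto qed
  { assume c1: "r$m = 1 \<and> q$m = 0 \<and> t1$m = 0 \<and> t2$m = 0"
    have "det4 t3 q t1 t2 = 0" by (rule det4_two_zero_columns[of j m]) (use mj c1 q t in auto)
    then have False using D by simp }
  moreover
  { assume c2: "r$m = 0 \<and> q$m = 1 \<and> t1$m = 0 \<and> t2$m = 0"
    have mi: "m \<noteq> i" using c2 q(1) by auto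
    have "t1 = t2" by (rule eq_if_agree3[OF T(2) T(3), of i j m]) (use mi mj ij c2 t in auto)
    then have False using D det4_same_rows34[of t3 q t2] by simp }
  moreover
  { assume c3: "r$m = 0 \<and> q$m = 0 \<and> t1$m = 1 \<and> t2$m = 0"
    have mi: "m \<noteq> i" using c3 t by auto
    have D': "det4 t1 r q t2 \<noteq> 0" using D2 by (metis det4_ne0_swap12 det4_ne0_swap23)
    have ?thesis
      by (rule coord01_pyramid_descent2[of i j m q r t2 t1]) (use ij mi mj T r q t c3 D' in auto) }
  moreover
  { assume c4: "r$m = 0 \<and> q$m = 0 \<and> t1$m = 0 \<and> t2$m = 1"
    have mi: "m \<noteq> i" using c4 t by auto
    have D': "det4 t2 r q t1 \<noteq> 0" using D2
      by (metis det4_ne0_swap12 det4_ne0_swap23 det4_ne0_swap34)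
    have ?thesis
      by (rule coord01_pyramid_descent2[of i j m q r t1 t2]) (use ij mi mj T r q t c4 D' in auto) }
  ultimately show ?thesis using m by blast
qed

lemma exists_coord01_pyramid:
  assumes C: "pyramid i p t1 t2 t3"
  shows "\<exists>c a s1 s2 s3. pyramid c a s1 s2 s3 \<and> coord01 c"
proof (cases "coord01 i")
  case True
  then show ?thesis using C by blast
next
  case False
  then obtain q where q: "q \<in> T" "q$i \<ge> 2" by (rule not_coord01E)
  from C have T: "p \<in> T" "t1 \<in> T" "t2 \<in> T" "t3 \<in> T" and D: "det4 p t1 t2 t3 \<noteq> 0"
    and t: "p$i = 1" "t1$i = 0" "t2$i = 0" "t3$i = 0" unfolding pyramid_def by auto
  have D1: "det4 q t1 t2 t3 \<noteq> 0" by (rule det4_ne0_change_first[OF D, where m=i]) (use t q in auto)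
  from unit_coordinate_if_det4_ne0[OF q(1) T(2) T(3) T(4) D1] obtain m where
    m: "(q$m = 1 \<and> t1$m = 0 \<and> t2$m = 0 \<and> t3$m = 0) \<or> (q$m = 0 \<and> t1$m = 1 \<and> t2$m = 0 \<and> t3$m = 0)
     \<or> (q$m = 0 \<and> t1$m = 0 \<and> t2$m = 1 \<and> t3$m = 0) \<or> (q$m = 0 \<and> t1$m = 0 \<and> t2$m = 0 \<and> t3$m = 1)"
    unfolding unit_coordinate_def by blast
  have mi: "m \<noteq> i"
  proof assume "m = i" then have "q$m \<ge> 2" using q by simp then show False using m by auto qed
  { assume c1: "q$m = 1 \<and> t1$m = 0 \<and> t2$m = 0 \<and> t3$m = 0"
    have "det4 p t1 t2 t3 = 0" by (rule det4_two_zero_columns[of i m]) (use mi c1 t in auto)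
    then have False using D by simp }
  moreover
  { assume c: "q$m = 0 \<and> t1$m = 1 \<and> t2$m = 0 \<and> t3$m = 0"
    have D': "det4 t1 q t2 t3 \<noteq> 0" using D1 by (metis det4_ne0_swap12)
    have ?thesis by (rule coord01_pyramid_descent1[of i m q t2 t3 t1]) (use mi T q t c D' in auto) }
  moreover
  { assume c: "q$m = 0 \<and> t1$m = 0 \<and> t2$m = 1 \<and> t3$m = 0"
    have D': "det4 t2 q t1 t3 \<noteq> 0" using D1 by (metis det4_ne0_swap12 det4_ne0_swap23)
    have ?thesis by (rule coord01_pyramid_descent1[of i m q t1 t3 t2]) (use mi T q t c D' in auto) }
  moreover
  { assume c: "q$m = 0 \<and> t1$m = 0 \<and> t2$m = 0 \<and> t3$m = 1"
    have D': "det4 t3 q t1 t2 \<noteq> 0" using D1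
      by (metis det4_ne0_swap12 det4_ne0_swap23 det4_ne0_swap34)
    have ?thesis by (rule coord01_pyramid_descent1[of i m q t1 t2 t3]) (use mi T q t c D' in auto) }
  ultimately show ?thesis using m by blast
qed

section \<open>Unit coordinates of quadruples spanning both layers\<close>

text \<open>The covector \<alpha> - (\<beta> - \<alpha>_m v) e_c - \<alpha>_m e_m vanishes on x, y, w and on e_m, but not at the
  remaining coordinates.\<close>

lemma det4_axis_eq0_if_two_coords_fixed:
  assumes T: "x \<in> T" "y \<in> T" "w \<in> T" and cm: "c \<noteq> m"
    and c: "x$c = 1" "y$c = 1" "w$c = 1" and m: "x$m = v" "y$m = v" "w$m = v"
  shows "det4 (axis m 1) x y w = 0"
proof (rule ccontr)
  assume "det4 (axis m 1) x y w \<noteq> 0"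
  then have D: "det4 (axis m 1) (rvec x) (rvec y) (rvec w) \<noteq> 0"
    using det4_rvec[of "axis m 1" x y w] rvec_axis[of m] by simp
  let ?f = "\<alpha> - (\<beta> - \<alpha>$m * v) *\<^sub>R axis c 1 - \<alpha>$m *\<^sub>R axis m 1 :: real^4"
  have f1: "dot4 ?f (rvec u) = 0" if "u \<in> T" "u$c = 1" "u$m = v" for u
  proof -
    have "dot4 ?f (rvec u) = dot4 \<alpha> (rvec u) - (\<beta> - \<alpha>$m * v) * (rvec u)$c - \<alpha>$m * (rvec u)$m"
      using exhaust_4[of c] exhaust_4[of m]
      by (elim disjE) (simp_all add: dot4_def axis_def algebra_simps)
    then show ?thesis using on_hyperplane[OF that(1)] that by simp
  qed
  have f2: "dot4 ?f (axis m 1) = 0"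
  proof -
    have "dot4 ?f (axis m 1) = \<alpha>$m - (\<beta> - \<alpha>$m * v) * (axis m 1 :: real^4)$c - \<alpha>$m"
      using exhaust_4[of c] exhaust_4[of m] cm
      by (elim disjE) (simp_all add: dot4_def axis_def algebra_simps)
    then show ?thesis using cm by (simp add: axis_def)
  qed
  have "?f = 0"
    by (rule covector_eq0_if_vanishes_on_basis[OF D f2 f1[OF T(1) c(1) m(1)] f1[OF T(2) c(2) m(2)]
          f1[OF T(3) c(3) m(3)]])
  moreover obtain n n' where "distinct [c,m,n,n']" using distinct2_extend[OF cm] by blast
  ultimately have "?f$n = 0" "n \<noteq> c" "n \<noteq> m" by auto
  then show False using normal_pos[of n] by (simp add: axis_def)
qed

text \<open>The covector \<alpha> - \<beta> e_c vanishes on the top layer and equals \<beta> on the bottom layer, so by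
  Cramer's rule det(x, y, w, z) is \<beta> times a non-zero 3x3 minor of x, y, w.\<close>

lemma det4_ne0_indep_top_bottom:
  assumes T: "x \<in> T" "y \<in> T" "w \<in> T" "z \<in> T"
    and c: "x$c = 1" "y$c = 1" "w$c = 1" "z$c = 0" and nc: "indep3 x y w"
  shows "det4 x y w z \<noteq> 0"
proof
  assume D0: "det4 x y w z = 0"
  obtain k where k: "det4 (axis k 1) x y w \<noteq> 0" using nc unfolding indep3_def by blast
  let ?f = "\<alpha> - \<beta> *\<^sub>R axis c 1 :: real^4"
  have fv: "dot4 ?f (rvec u) = \<beta> - \<beta> * u$c" if "u \<in> T" for u
  proof -
    have "dot4 ?f (rvec u) = dot4 \<alpha> (rvec u) - \<beta> * (rvec u)$c"
      using exhaust_4[of c] by (elim disjE) (simp_all add: dot4_def axis_def algebra_simps)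
    then show ?thesis using on_hyperplane[OF that] by simp
  qed
  have "det4 (vec_upd (rvec x) k (dot4 ?f (rvec x))) (vec_upd (rvec y) k (dot4 ?f (rvec y)))
      (vec_upd (rvec w) k (dot4 ?f (rvec w))) (vec_upd (rvec z) k (dot4 ?f (rvec z)))
      = ?f$k * det4 (rvec x) (rvec y) (rvec w) (rvec z)"
    by (rule det4_cramer)
  also have "\<dots> = 0" using D0 det4_rvec[of x y w z] by simp
  finally have E: "det4 (vec_upd (rvec x) k 0) (vec_upd (rvec y) k 0) (vec_upd (rvec w) k 0)
      (vec_upd (rvec z) k \<beta>) = 0"
    using fv[OF T(1)] fv[OF T(2)] fv[OF T(3)] fv[OF T(4)] c by simp
  have "det4 (vec_upd (rvec z) k \<beta>) (vec_upd (rvec x) k 0) (vec_upd (rvec y) k 0)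
      (vec_upd (rvec w) k 0)
      = (vec_upd (rvec z) k \<beta>)$k *
        det4 (axis k 1) (vec_upd (rvec x) k 0) (vec_upd (rvec y) k 0) (vec_upd (rvec w) k 0)"
    by (rule det4_factor_column) (simp_all add: vec_upd_def)
  also have "\<dots> = \<beta> * det4 (axis k 1) (rvec x) (rvec y) (rvec w)"
    by (simp only: det4_axis_vec_upd) (simp add: vec_upd_def)
  finally have "\<beta> * det4 (axis k 1) (rvec x) (rvec y) (rvec w) = 0"
    using E det4_rotate[of "vec_upd (rvec z) k \<beta>" "vec_upd (rvec x) k 0" "vec_upd (rvec y) k 0"
        "vec_upd (rvec w) k 0"] by simp
  then have "det4 (axis k 1) (rvec x) (rvec y) (rvec w) = 0" using offset_pos by simp
  then show False using k det4_rvec[of "axis k 1" x y w] rvec_axis[of k] by simp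
qed

lemma top_eq_if_parallel_to_bottom:
  assumes T: "p1 \<in> T" "p2 \<in> T" "z \<in> T" and c: "p1$c = 1" "p2$c = 1" "z$c = 0"
    and parallel: "\<And>m n. distinct [c,m,n] \<Longrightarrow> minor2 (p2 - p1) z m n = 0"
  shows "p1 = p2"
proof -
  obtain k1 k2 k3 where dk: "distinct [c,k1,k2,k3]" by (rule distinct1_extend)
  let ?d = "p2 - p1"
  have on: "\<alpha>$c * x$c + \<alpha>$k1 * x$k1 + \<alpha>$k2 * x$k2 + \<alpha>$k3 * x$k3 = \<beta>" if "x \<in> T" for x
    using on_hyperplane_perm[OF that dk] .
  have minor: "real_of_int (?d$m) * real_of_int (z$n) = real_of_int (?d$n) * real_of_int (z$m)"
    if "distinct [c,m,n]" for m n
    using parallel[OF that] unfolding minor2_def by (metis eq_iff_diff_eq_0 of_int_mult)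
  have "real_of_int (?d$k1) = 0 \<and> real_of_int (?d$k2) = 0 \<and> real_of_int (?d$k3) = 0"
  proof (rule parallel_eq0_if_orthogonal[where aa = "\<alpha>$k1" and ab = "\<alpha>$k2" and ac = "\<alpha>$k3"
        and za = "real_of_int (z$k1)" and zb = "real_of_int (z$k2)" and zc = "real_of_int (z$k3)"])
    show "\<alpha>$k1 * real_of_int (?d$k1) + \<alpha>$k2 * real_of_int (?d$k2) + \<alpha>$k3 * real_of_int (?d$k3) = 0"
      using on[OF T(1)] on[OF T(2)] c by (simp add: algebra_simps)
    show "\<alpha>$k1 * real_of_int (z$k1) + \<alpha>$k2 * real_of_int (z$k2) + \<alpha>$k3 * real_of_int (z$k3) = \<beta>"
      using on[OF T(3)] c by simp
  qed (use minor dk offset_pos in auto)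
  then have "?d$i = 0" for i using distinct4_cases[OF dk, of i] c by auto
  then show "p1 = p2" by (simp add: vec_eq_iff)
qed

lemma det4_ne0_pair_top_bottom_base:
  assumes C: "pyramid c a t1 t2 t3" and T: "p1 \<in> T" "p2 \<in> T" "z \<in> T"
    and c: "p1$c = 1" "p2$c = 1" "z$c = 0" and ne: "p1 \<noteq> p2"
  shows "det4 p1 p2 z t1 \<noteq> 0 \<or> det4 p1 p2 z t2 \<noteq> 0 \<or> det4 p1 p2 z t3 \<noteq> 0"
proof (rule ccontr)
  assume H: "\<not> ?thesis"
  from C have D: "det4 a t1 t2 t3 \<noteq> 0" and t: "a$c = 1" "t1$c = 0" "t2$c = 0" "t3$c = 0"
    unfolding pyramid_def by auto
  have "det4 p1 t1 t2 t3 \<noteq> 0" by (rule det4_ne0_change_first[OF D, where m=c]) (use t c in auto)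
  then have vanish: "det4 p1 p2 z w = 0" for w
    by (rule det4_eq0_if_vanishes_on_basis) (use H det4_same_rows14[of p1 p2 z] in auto)
  have "p1 = p2"
  proof (rule top_eq_if_parallel_to_bottom[OF T c])
    fix m n assume "distinct [c,m,n]"
    then obtain k where "distinct [c,m,n,k]" by (rule distinct3_extend)
    then have "distinct [k,c,m,n]" by auto
    then show "minor2 (p2 - p1) z m n = 0" by (rule minor2_eq0_if_det4_vanishes[OF c vanish])
  qed
  then show False using ne by simp
qed

lemma unit_coord_pair_top_bottom:
  assumes C: "pyramid c a t1 t2 t3" and T: "p1 \<in> T" "p2 \<in> T" "z \<in> T"
    and c: "p1$c = 1" "p2$c = 1" "z$c = 0" and ne: "p1 \<noteq> p2"
  shows "\<exists>z'. z' \<in> T \<and> z'$c = 0 \<and> z' \<noteq> z \<and> (\<exists>m. m \<noteq> c \<and>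
     ((p1$m = 1 \<and> p2$m = 0 \<and> z$m = 0 \<and> z'$m = 0) \<or> (p1$m = 0 \<and> p2$m = 1 \<and> z$m = 0 \<and> z'$m = 0) \<or>
      (p1$m = 0 \<and> p2$m = 0 \<and> z$m = 1 \<and> z'$m = 0) \<or> (p1$m = 0 \<and> p2$m = 0 \<and> z$m = 0 \<and> z'$m = 1)))"
proof -
  from C have CT: "t1 \<in> T" "t2 \<in> T" "t3 \<in> T" and t: "t1$c = 0" "t2$c = 0" "t3$c = 0"
    unfolding pyramid_def by auto
  obtain t where tt: "t \<in> T" "t$c = 0" and D: "det4 p1 p2 z t \<noteq> 0"
    using det4_ne0_pair_top_bottom_base[OF assms] CT t by blast
  have tz: "t \<noteq> z" using D det4_same_rows34[of p1 p2 z] by auto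
  from unit_coordinate_if_det4_ne0[OF T tt(1) D] obtain m where
    m: "(p1$m = 1 \<and> p2$m = 0 \<and> z$m = 0 \<and> t$m = 0) \<or> (p1$m = 0 \<and> p2$m = 1 \<and> z$m = 0 \<and> t$m = 0)
     \<or> (p1$m = 0 \<and> p2$m = 0 \<and> z$m = 1 \<and> t$m = 0) \<or> (p1$m = 0 \<and> p2$m = 0 \<and> z$m = 0 \<and> t$m = 1)"
    unfolding unit_coordinate_def by blast
  have "m \<noteq> c" using m c by auto
  then show ?thesis using tt tz m by blast
qed

lemma unit_coord_indep_top_bottom:
  assumes T: "x \<in> T" "y \<in> T" "w \<in> T" "z \<in> T"
    and c: "x$c = 1" "y$c = 1" "w$c = 1" "z$c = 0" and nc: "indep3 x y w"
  shows "\<exists>m. m \<noteq> c \<and> z$m = 0 \<and>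
    ((x$m = 1 \<and> y$m = 0 \<and> w$m = 0) \<or> (x$m = 0 \<and> y$m = 1 \<and> w$m = 0) \<or> (x$m = 0 \<and> y$m = 0 \<and> w$m = 1))"
proof -
  have D: "det4 x y w z \<noteq> 0" by (rule det4_ne0_indep_top_bottom[OF assms])
  from unit_coordinate_if_det4_ne0[OF T D] obtain m where
    m: "(x$m = 1 \<and> y$m = 0 \<and> w$m = 0 \<and> z$m = 0) \<or> (x$m = 0 \<and> y$m = 1 \<and> w$m = 0 \<and> z$m = 0)
     \<or> (x$m = 0 \<and> y$m = 0 \<and> w$m = 1 \<and> z$m = 0) \<or> (x$m = 0 \<and> y$m = 0 \<and> w$m = 0 \<and> z$m = 1)"
    unfolding unit_coordinate_def by blast
  have mc: "m \<noteq> c" using m c by auto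
  have "\<not> (x$m = 0 \<and> y$m = 0 \<and> w$m = 0 \<and> z$m = 1)"
  proof
    assume h: "x$m = 0 \<and> y$m = 0 \<and> w$m = 0 \<and> z$m = 1"
    have "det4 (axis m 1) x y w = 0"
      by (rule det4_axis_eq0_if_two_coords_fixed[OF T(1-3), of c m 0]) (use mc c h in auto)
    moreover have "det4 z x y w = z$m * det4 (axis m 1) x y w"
      by (rule det4_factor_column) (use h in auto)
    ultimately have "det4 z x y w = 0" by simp
    then show False using D det4_rotate[of z x y w] by simp
  qed
  then show ?thesis using m mc by blast
qed

definition unit_swap_outside :: "int^4 \<Rightarrow> int^4 \<Rightarrow> 4 \<Rightarrow> 4 \<Rightarrow> bool" where
  "unit_swap_outside P Q c j \<longleftrightarrow>
     (\<exists>m. m \<noteq> c \<and> m \<noteq> j \<and> ((P$m = 0 \<and> Q$m = 1) \<or> (P$m = 1 \<and> Q$m = 0)))"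

lemma no_three_unit_swaps:
  assumes T: "x \<in> T" "y \<in> T" "w \<in> T" and ne: "x \<noteq> y" "x \<noteq> w" "y \<noteq> w" and cj: "c \<noteq> j"
    and ag: "y$c = x$c" "w$c = x$c" "y$j = x$j" "w$j = x$j"
    and D: "unit_swap_outside x y c j" "unit_swap_outside x w c j" "unit_swap_outside y w c j"
  shows False
proof -
  obtain k l where d: "distinct [c,j,k,l]" using distinct2_extend[OF cj] by blast
  have incomparable: "\<not> (P$k \<le> Q$k \<and> P$l \<le> Q$l)"
    if "P \<in> T" "Q \<in> T" "P \<noteq> Q" "P$c = Q$c" "P$j = Q$j" for P Q
  proof
    assume le: "P$k \<le> Q$k \<and> P$l \<le> Q$l"
    have "\<And>n. P$n \<le> Q$n" by (rule le_if_distinct4[OF d]) (use that le in auto)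
    then show False using eq_if_le[OF that(1,2)] that(3) by blast
  qed
  have swap: "(P$k = 0 \<and> Q$k = 1) \<or> (P$k = 1 \<and> Q$k = 0) \<or> (P$l = 0 \<and> Q$l = 1) \<or> (P$l = 1 \<and> Q$l = 0)"
    if swapped: "unit_swap_outside P Q c j" for P Q
  proof -
    obtain m where m: "m \<noteq> c" "m \<noteq> j" "(P$m = 0 \<and> Q$m = 1) \<or> (P$m = 1 \<and> Q$m = 0)"
      using swapped unfolding unit_swap_outside_def by blast
    then have "m = k \<or> m = l" using distinct4_cases[OF d, of m] by auto
    then show ?thesis using m(3) by auto
  qed
  show False
  proof (rule incomparable_triple_no_unit_swaps[where xk = "x$k" and xl = "x$l" and yk = "y$k"
        and yl = "y$l" and wk = "w$k" and wl = "w$l"])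
    show "\<not> (x$k \<le> y$k \<and> x$l \<le> y$l)" "\<not> (y$k \<le> x$k \<and> y$l \<le> x$l)"
      "\<not> (x$k \<le> w$k \<and> x$l \<le> w$l)" "\<not> (w$k \<le> x$k \<and> w$l \<le> x$l)"
      "\<not> (y$k \<le> w$k \<and> y$l \<le> w$l)" "\<not> (w$k \<le> y$k \<and> w$l \<le> y$l)"
      by (rule incomparable; use T ne ag in simp)+
  qed (fact swap[OF D(1)] swap[OF D(2)] swap[OF D(3)])+
qed

lemma unit_swap_pair_top:
  assumes C: "pyramid c a t1 t2 t3" and T: "P \<in> T" "Q \<in> T" "z \<in> T"
    and c: "P$c = 1" "Q$c = 1" "z$c = 0" and ne: "P \<noteq> Q" and cj: "j \<noteq> c" and ag: "P$j = Q$j"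
    and side: "P$j = 0 \<Longrightarrow> z$j \<noteq> 0 \<and> z$j \<noteq> 1"
  shows "unit_swap_outside P Q c j"
proof -
  obtain z' m where z': "z' \<in> T" "z'$c = 0" "z' \<noteq> z" and mc: "m \<noteq> c" and
    m: "(P$m = 1 \<and> Q$m = 0 \<and> z$m = 0 \<and> z'$m = 0) \<or> (P$m = 0 \<and> Q$m = 1 \<and> z$m = 0 \<and> z'$m = 0) \<or>
      (P$m = 0 \<and> Q$m = 0 \<and> z$m = 1 \<and> z'$m = 0) \<or> (P$m = 0 \<and> Q$m = 0 \<and> z$m = 0 \<and> z'$m = 1)"
    using unit_coord_pair_top_bottom[OF C T c ne] by blast
  show ?thesis
  proof (cases "P$m = 0 \<and> Q$m = 0")
    case True
    have mj: "m \<noteq> j"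
    proof assume "m = j" then show False using True side m by auto qed
    have "P = Q" by (rule eq_if_agree3[OF T(1,2), of c j m]) (use cj mj mc c ag True in auto)
    then show ?thesis using ne by simp
  next
    case False
    then have h: "(P$m = 1 \<and> Q$m = 0) \<or> (P$m = 0 \<and> Q$m = 1)" using m by auto
    then have "m \<noteq> j" using ag by auto
    then show ?thesis unfolding unit_swap_outside_def using mc h by blast
  qed
qed

lemma unit_swap_pair_top_indep_at:
  assumes T: "P \<in> T" "Q \<in> T" "R \<in> T" "z \<in> T"
    and c: "P$c = 1" "Q$c = 1" "R$c = 1" "z$c = 0" and ne: "P \<noteq> Q" and cj: "j \<noteq> c"
    and j: "P$j = 0" "Q$j = 0" "R$j \<noteq> 0" "z$j \<noteq> 0"
  obtains m where "m \<noteq> c" "m \<noteq> j" "z$m = 0" "R$m = 0"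
    "(P$m = 0 \<and> Q$m = 1) \<or> (P$m = 1 \<and> Q$m = 0)"
proof -
  have "indep3 P Q R" by (rule indep3I[of c j]) (use cj c j ne in auto)
  then obtain m where m: "m \<noteq> c" "z$m = 0"
    "(P$m = 1 \<and> Q$m = 0 \<and> R$m = 0) \<or> (P$m = 0 \<and> Q$m = 1 \<and> R$m = 0) \<or>
      (P$m = 0 \<and> Q$m = 0 \<and> R$m = 1)"
    using unit_coord_indep_top_bottom[OF T c] by blast
  have mj: "m \<noteq> j" using m(2) j(4) by auto
  have "\<not> (P$m = 0 \<and> Q$m = 0)"
    using eq_if_agree3[OF T(1,2), of c j m] cj mj m(1) c j ne by auto
  then show ?thesis using that m mj by auto
qed

lemma unit_swap_pair_top_indep:
  assumes T: "P \<in> T" "Q \<in> T" "R \<in> T" "z \<in> T"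
    and c: "P$c = 1" "Q$c = 1" "R$c = 1" "z$c = 0" and ne: "P \<noteq> Q" and cj: "j \<noteq> c"
    and j: "P$j = 0" "Q$j = 0" "R$j \<noteq> 0" "z$j \<noteq> 0"
  shows "unit_swap_outside P Q c j"
  using unit_swap_pair_top_indep_at[OF assms] unfolding unit_swap_outside_def by metis

section \<open>A second 0/1-valued coordinate on the top layer\<close>

definition top_coord01 :: "4 \<Rightarrow> 4 \<Rightarrow> bool" where
  "top_coord01 c j \<longleftrightarrow> (\<forall>x\<in>T. x$c = 1 \<longrightarrow> x$j = 0 \<or> x$j = 1)"

definition top_zero_pair :: "4 \<Rightarrow> 4 \<Rightarrow> bool" where
  "top_zero_pair c j \<longleftrightarrow> j \<noteq> c \<and> top_coord01 c j \<and>
     (\<exists>a1 a2. a1 \<in> T \<and> a2 \<in> T \<and> a1$c = 1 \<and> a2$c = 1 \<and> a1 \<noteq> a2 \<and> a1$j = 0 \<and> a2$j = 0)"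

lemma not_top_coord01E:
  assumes "\<not> top_coord01 c j"
  obtains q where "q \<in> T" "q$c = 1" "q$j \<ge> 2"
  using assms coord_ge2 unfolding top_coord01_def by blast

lemma top_coord01_if_dominated:
  assumes s: "s \<in> T" "distinct [c,i,j,l]" "s$c = 1" "s$i = 0" "s$j = 0" "s$l = 1"
  shows "top_coord01 c l"
  unfolding top_coord01_def
proof (intro ballI impI)
  fix x assume x: "x \<in> T" "x$c = 1"
  show "x$l = 0 \<or> x$l = 1"
  proof (rule ccontr)
    assume "\<not> ?thesis"
    then have xl: "x$l \<ge> 2" using coord_ge2[OF x(1)] by auto
    have "s$n \<le> x$n" for n by (rule le_if_distinct4[OF s(2)]) (use s x xl nonneg[OF x(1)] in auto)
    then have "s = x" using eq_if_le[OF s(1) x(1)] by blast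
    then show False using s(6) xl by simp
  qed
qed

text \<open>The descent of the previous section, inside the top layer: two top points vanishing at i
  and a top point q with q_i \<ge> 2 are independent, and the unit coordinate they share with a
  bottom point is the next candidate for j.\<close>

lemma exists_top_zero_pair_descent2:
  assumes z: "z \<in> T" "z$c = 0" and d: "distinct [c,i,j]" and T: "q \<in> T" "s \<in> T"
    and c: "q$c = 1" "s$c = 1" and q: "q$i \<ge> 2" "q$j = 0" and s: "s$i = 0" "s$j = 0"
  shows "\<exists>j'. top_zero_pair c j'"
proof (cases "top_coord01 c j")
  case True
  have "q \<noteq> s" using q s by auto
  then have "top_zero_pair c j" unfolding top_zero_pair_def using True d T c q s by auto
  then show ?thesis by blast
next
  case False
  then obtain r where r: "r \<in> T" "r$c = 1" "r$j \<ge> 2" by (rule not_top_coord01E)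
  have qs: "q \<noteq> s" using q s by auto
  have "indep3 q s r" by (rule indep3I[of c j]) (use d c q s r qs in auto)
  then obtain l where l: "l \<noteq> c" "z$l = 0"
    "(q$l = 1 \<and> s$l = 0 \<and> r$l = 0) \<or> (q$l = 0 \<and> s$l = 1 \<and> r$l = 0) \<or>
      (q$l = 0 \<and> s$l = 0 \<and> r$l = 1)"
    using unit_coord_indep_top_bottom[OF T r(1) z(1) c r(2) z(2)] by blast
  have "l \<noteq> i" "l \<noteq> j" using l(3) q s r by auto
  then have dl: "distinct [c,i,j,l]" using d l(1) by auto
  { assume h: "q$l = 1 \<and> s$l = 0 \<and> r$l = 0"
    have "s$n \<le> q$n" for n by (rule le_if_distinct4[OF dl]) (use c s h q nonneg[OF T(1)] in auto)
    then have False using eq_if_le[OF T(2) T(1)] qs by metis }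
  moreover
  { assume h: "q$l = 0 \<and> s$l = 0 \<and> r$l = 1"
    have "q = s" by (rule eq_if_agree3[OF T, of c j l]) (use dl c q s h in auto)
    then have False using qs by simp }
  moreover
  { assume h: "q$l = 0 \<and> s$l = 1 \<and> r$l = 0"
    have "top_coord01 c l" by (rule top_coord01_if_dominated[OF T(2) dl]) (use c s h in auto)
    moreover have "q \<noteq> r" using q r by auto
    ultimately have "top_zero_pair c l" unfolding top_zero_pair_def using l T r c h by blast
    then have ?thesis by blast }
  ultimately show ?thesis using l(3) by blast
qed

lemma exists_top_zero_pair_descent1:
  assumes z: "z \<in> T" "z$c = 0" and ic: "i \<noteq> c" and T: "s1 \<in> T" "s2 \<in> T"
    and c: "s1$c = 1" "s2$c = 1" and ne: "s1 \<noteq> s2" and s: "s1$i = 0" "s2$i = 0"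
  shows "\<exists>j. top_zero_pair c j"
proof (cases "top_coord01 c i")
  case True
  then have "top_zero_pair c i" unfolding top_zero_pair_def using ic T c ne s by blast
  then show ?thesis by blast
next
  case False
  then obtain q where q: "q \<in> T" "q$c = 1" "q$i \<ge> 2" by (rule not_top_coord01E)
  have nc: "indep3 s1 s2 q" by (rule indep3I[of c i]) (use ic c s q ne in auto)
  obtain j where j: "j \<noteq> c" "z$j = 0"
    "(s1$j = 1 \<and> s2$j = 0 \<and> q$j = 0) \<or> (s1$j = 0 \<and> s2$j = 1 \<and> q$j = 0) \<or>
      (s1$j = 0 \<and> s2$j = 0 \<and> q$j = 1)"
    using unit_coord_indep_top_bottom[OF T q(1) z(1) c q(2) z(2) nc] by blast
  { assume h: "s1$j = 1 \<and> s2$j = 0 \<and> q$j = 0"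
    have ji: "j \<noteq> i" using h s by auto
    have ?thesis
      by (rule exists_top_zero_pair_descent2[OF z, of i j q s2]) (use ic ji j q T c s h in auto) }
  moreover
  { assume h: "s1$j = 0 \<and> s2$j = 1 \<and> q$j = 0"
    have ji: "j \<noteq> i" using h s by auto
    have ?thesis
      by (rule exists_top_zero_pair_descent2[OF z, of i j q s1]) (use ic ji j q T c s h in auto) }
  moreover
  { assume h: "s1$j = 0 \<and> s2$j = 0 \<and> q$j = 1"
    have ji: "j \<noteq> i" using h q by auto
    have "s1 = s2" by (rule eq_if_agree3[OF T, of c i j]) (use ic ji j c s h in auto)
    then have False using ne by simp }
  ultimately show ?thesis using j(3) by blast
qed

lemma exists_top_zero_pair:
  assumes z: "z \<in> T" "z$c = 0" and T: "s1 \<in> T" "s2 \<in> T" "s3 \<in> T"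
    and c: "s1$c = 1" "s2$c = 1" "s3$c = 1" and nc: "indep3 s1 s2 s3"
  shows "\<exists>j. top_zero_pair c j"
proof -
  have ne: "s1 \<noteq> s2" "s1 \<noteq> s3" "s2 \<noteq> s3" using indep3_distinct[OF nc] by auto
  obtain i where i: "i \<noteq> c" "z$i = 0"
    "(s1$i = 1 \<and> s2$i = 0 \<and> s3$i = 0) \<or> (s1$i = 0 \<and> s2$i = 1 \<and> s3$i = 0) \<or>
      (s1$i = 0 \<and> s2$i = 0 \<and> s3$i = 1)"
    using unit_coord_indep_top_bottom[OF T z(1) c z(2) nc] by blast
  { assume h: "s1$i = 1 \<and> s2$i = 0 \<and> s3$i = 0"
    have ?thesis by (rule exists_top_zero_pair_descent1[OF z i(1) T(2) T(3)]) (use c ne h in auto) }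
  moreover
  { assume h: "s1$i = 0 \<and> s2$i = 1 \<and> s3$i = 0"
    have ?thesis by (rule exists_top_zero_pair_descent1[OF z i(1) T(1) T(3)]) (use c ne h in auto) }
  moreover
  { assume h: "s1$i = 0 \<and> s2$i = 0 \<and> s3$i = 1"
    have ?thesis by (rule exists_top_zero_pair_descent1[OF z i(1) T(1) T(2)]) (use c ne h in auto) }
  ultimately show ?thesis using i(3) by blast
qed

section \<open>Classification by the shape of the top layer\<close>

lemma classified_if_unique_top_nonzero:
  assumes c01: "coord01 c" and jc: "j \<noteq> c" and C: "C \<in> T" "C$c = 1" "C$j = 1"
    and top: "\<And>x. x \<in> T \<Longrightarrow> x$c = 1 \<Longrightarrow> x \<noteq> C \<Longrightarrow> x$j = 0"
    and z: "z1 \<in> T" "z2 \<in> T" "z1 \<noteq> z2" "z1$c = 0" "z2$c = 0" "z1$j = 0" "z2$j = 0"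
  shows "B_facet_classified T"
proof (rule classified_flat_borderI[of c j C z1 z2])
  fix x assume "x \<in> T" "x \<noteq> C"
  then show "x$c = 0 \<or> x$j = 0" using c01 top unfolding coord01_def by blast
qed (use jc C z in auto)

lemma classified_if_top_vanishes_bottom01:
  assumes c01: "coord01 c" and jc: "j \<noteq> c"
    and top: "\<And>x. x \<in> T \<Longrightarrow> x$c = 1 \<Longrightarrow> x$j = 0"
    and bottom: "\<And>x. x \<in> T \<Longrightarrow> x$c = 0 \<Longrightarrow> x$j = 0 \<or> x$j = 1"
  shows "B_facet_classified T"
proof (rule classified_B2I[OF jc])
  fix x assume x: "x \<in> T"
  then have "x$c = 0 \<or> x$c = 1" using c01 unfolding coord01_def by blast
  then show "(x$c, x$j) \<in> {(0,0),(1,0),(0,1)}" using top[OF x] bottom[OF x] by auto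
qed

lemma classified_if_top_vanishes:
  assumes C: "pyramid c a t1 t2 t3" and c01: "coord01 c" and jc: "j \<noteq> c"
    and T: "x1 \<in> T" "x2 \<in> T" "x3 \<in> T" and c: "x1$c = 1" "x2$c = 1" "x3$c = 1"
    and ne: "x1 \<noteq> x2" "x1 \<noteq> x3" "x2 \<noteq> x3" and top: "\<And>x. x \<in> T \<Longrightarrow> x$c = 1 \<Longrightarrow> x$j = 0"
  shows "B_facet_classified T"
proof (cases "\<forall>z\<in>T. z$c = 0 \<longrightarrow> z$j = 0 \<or> z$j = 1")
  case True
  then show ?thesis using classified_if_top_vanishes_bottom01[OF c01 jc top] by blast
next
  case False
  then obtain z where z: "z \<in> T" "z$c = 0" "z$j \<noteq> 0" "z$j \<noteq> 1" by blast
  have j0: "x1$j = 0" "x2$j = 0" "x3$j = 0" using top T c by auto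
  have "unit_swap_outside x1 x2 c j"
    by (rule unit_swap_pair_top[OF C T(1) T(2) z(1) c(1) c(2) z(2) ne(1) jc]) (use j0 z in auto)
  moreover have "unit_swap_outside x1 x3 c j"
    by (rule unit_swap_pair_top[OF C T(1) T(3) z(1) c(1) c(3) z(2) ne(2) jc]) (use j0 z in auto)
  moreover have "unit_swap_outside x2 x3 c j"
    by (rule unit_swap_pair_top[OF C T(2) T(3) z(1) c(2) c(3) z(2) ne(3) jc]) (use j0 z in auto)
  ultimately show ?thesis using no_three_unit_swaps[OF T ne, of c j] jc c j0 by auto
qed

lemma no_two_top_ones_swapped:
  assumes d: "distinct [c,j,k,l]" and t: "t \<in> T" "t$c = 0" "t$j \<noteq> 0"
    and A: "a1 \<in> T" "a2 \<in> T" "a1$c = 1" "a2$c = 1" "a1 \<noteq> a2" "a1$j = 0" "a2$j = 0"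
    and U: "u \<in> T" "v \<in> T" "u$c = 1" "v$c = 1" "u \<noteq> v" "u$j = 1" "v$j = 1" "u$k = 0" "v$k = 1"
  shows False
proof -
  have jc: "j \<noteq> c" using d by auto
  have "u$l \<noteq> 0"
  proof
    assume "u$l = 0"
    have "u$n \<le> v$n" for n
      by (rule le_if_distinct4[OF d]) (use U \<open>u$l = 0\<close> nonneg[OF U(2)] in auto)
    then show False using eq_if_le[OF U(1) U(2)] U(5) by blast
  qed
  obtain m where "m \<noteq> c" "m \<noteq> j" "t$m = 0" "u$m = 0"
    and am: "(a1$m = 0 \<and> a2$m = 1) \<or> (a1$m = 1 \<and> a2$m = 0)"
    by (rule unit_swap_pair_top_indep_at[OF A(1,2) U(1) t(1) A(3,4) U(3) t(2) A(5) jc])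
      (use A U t in auto)
  with \<open>u$l \<noteq> 0\<close> have "m = k" using distinct4_cases[OF d, of m] by auto
  with am have ak: "(a1$k = 0 \<and> a2$k = 1) \<or> (a1$k = 1 \<and> a2$k = 0)" by simp
  obtain m' where "m' \<noteq> c" "m' \<noteq> j" "t$m' = 0" "v$m' = 0"
    and am': "(a1$m' = 0 \<and> a2$m' = 1) \<or> (a1$m' = 1 \<and> a2$m' = 0)"
    by (rule unit_swap_pair_top_indep_at[OF A(1,2) U(2) t(1) A(3,4) U(4) t(2) A(5) jc])
      (use A U t in auto)
  then have "m' = l" using U(9) distinct4_cases[OF d, of m'] by auto
  with am' \<open>v$m' = 0\<close> have al: "(a1$l = 0 \<and> a2$l = 1) \<or> (a1$l = 1 \<and> a2$l = 0)" and vl: "v$l = 0"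
    by simp_all
  text \<open>The top point with x_k = 1 either dominates the other one or is dominated by v.\<close>
  have impossible: False
    if P: "P \<in> T" "P$c = 1" "P$j = 0" "P$k = 1" and Q: "Q \<in> T" "Q$c = 1" "Q$j = 0" "Q$k = 0"
    and PQ: "P \<noteq> Q" "(P$l = 1 \<and> Q$l = 0) \<or> (P$l = 0 \<and> Q$l = 1)" for P Q
  proof (cases "Q$l = 0")
    case True
    have "Q$n \<le> P$n" for n by (rule le_if_distinct4[OF d]) (use P Q True nonneg[OF P(1)] in auto)
    then show False using eq_if_le[OF Q(1) P(1)] PQ(1) by blast
  next
    case False
    have "P$n \<le> v$n" for n by (rule le_if_distinct4[OF d]) (use P PQ(2) False U vl in auto)
    then show False using eq_if_le[OF P(1) U(2)] P(3) U(7) by force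
  qed
  consider "a1$k = 1" "a2$k = 0" | "a2$k = 1" "a1$k = 0" using ak by auto
  then show False
  proof cases
    case 1
    show False by (rule impossible[of a1 a2]) (use 1 A al in auto)
  next
    case 2
    show False by (rule impossible[of a2 a1]) (use 2 A al in auto)
  qed
qed

lemma no_two_top_ones:
  assumes C: "pyramid c a t1 t2 t3" and jc: "j \<noteq> c"
    and A: "a1 \<in> T" "a2 \<in> T" "a1$c = 1" "a2$c = 1" "a1 \<noteq> a2" "a1$j = 0" "a2$j = 0"
    and U: "u \<in> T" "v \<in> T" "u$c = 1" "v$c = 1" "u \<noteq> v" "u$j = 1" "v$j = 1"
  shows False
proof -
  obtain t where t: "t \<in> T" "t$c = 0" "t$j \<noteq> 0" using pyramid_base_coord_ne0[OF C jc] by blast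
  from C have t1: "t1 \<in> T" "t1$c = 0" unfolding pyramid_def by auto
  have "unit_swap_outside u v c j"
    by (rule unit_swap_pair_top[OF C U(1,2) t1(1) U(3,4) t1(2) U(5) jc]) (use U in auto)
  then obtain m where m: "m \<noteq> c" "m \<noteq> j" and swap: "(u$m = 0 \<and> v$m = 1) \<or> (u$m = 1 \<and> v$m = 0)"
    unfolding unit_swap_outside_def by blast
  have "distinct [c,j,m]" using jc m by auto
  then obtain l where d: "distinct [c,j,m,l]" by (rule distinct3_extend)
  from swap show False
  proof
    assume "u$m = 0 \<and> v$m = 1"
    then show False using no_two_top_ones_swapped[OF d t A U] by blast
  next
    assume "u$m = 1 \<and> v$m = 0"
    then show False using no_two_top_ones_swapped[OF d t A U(2,1,4,3) U(5)[symmetric] U(7,6)]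
      by blast
  qed
qed

lemma classified_if_two_top_split:
  assumes c01: "coord01 c" and mc: "m \<noteq> c" and P: "P \<in> T" "P$c = 1" "P$m = 1" "Q$m = 0"
    and only: "\<And>x. x \<in> T \<Longrightarrow> x$c = 1 \<Longrightarrow> x = P \<or> x = Q"
    and z: "z1 \<in> T" "z2 \<in> T" "z1 \<noteq> z2" "z1$c = 0" "z2$c = 0" "z1$m = 0" "z2$m = 0"
  shows "B_facet_classified T"
proof (rule classified_if_unique_top_nonzero[OF c01 mc P(1-3) _ z])
  fix x assume "x \<in> T" "x$c = 1" "x \<noteq> P"
  then show "x$m = 0" using only P(4) by blast
qed

lemma classified_if_two_top_common_zero:
  assumes C: "pyramid c a t1 t2 t3" and c01: "coord01 c" and o: "o' \<in> T" "o'$c = 1" "o' \<noteq> a"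
    and only: "\<And>x. x \<in> T \<Longrightarrow> x$c = 1 \<Longrightarrow> x = a \<or> x = o'"
    and mc: "m \<noteq> c" and z0: "a$m = 0" "o'$m = 0"
  shows "B_facet_classified T"
proof (cases "\<forall>z\<in>T. z$c = 0 \<longrightarrow> z$m = 0 \<or> z$m = 1")
  case True
  have "x$m = 0" if "x \<in> T" "x$c = 1" for x using only[OF that] z0 by auto
  then show ?thesis using classified_if_top_vanishes_bottom01[OF c01 mc] True by blast
next
  case False
  then obtain z where z: "z \<in> T" "z$c = 0" "z$m \<noteq> 0" "z$m \<noteq> 1" by blast
  from C have a: "a \<in> T" "a$c = 1" unfolding pyramid_def by auto
  obtain z' m' where z': "z' \<in> T" "z'$c = 0" "z' \<noteq> z" and mc': "m' \<noteq> c" and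
    mm: "(a$m' = 1 \<and> o'$m' = 0 \<and> z$m' = 0 \<and> z'$m' = 0) \<or>
      (a$m' = 0 \<and> o'$m' = 1 \<and> z$m' = 0 \<and> z'$m' = 0) \<or>
      (a$m' = 0 \<and> o'$m' = 0 \<and> z$m' = 1 \<and> z'$m' = 0) \<or>
      (a$m' = 0 \<and> o'$m' = 0 \<and> z$m' = 0 \<and> z'$m' = 1)"
    using unit_coord_pair_top_bottom[OF C a(1) o(1) z(1) a(2) o(2) z(2) o(3)[symmetric]] by blast
  have "m' \<noteq> m" using mm z by auto
  then have "\<not> (a$m' = 0 \<and> o'$m' = 0)"
    using eq_if_agree3[OF a(1) o(1), of c m m'] mc mc' a o z0 by auto
  with mm consider "a$m' = 1" "o'$m' = 0" "z$m' = 0" "z'$m' = 0"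
    | "o'$m' = 1" "a$m' = 0" "z$m' = 0" "z'$m' = 0" by auto
  then show ?thesis
  proof cases
    case 1
    show ?thesis
      by (rule classified_if_two_top_split[OF c01 mc' a 1(1,2) only z(1) z'(1)])
        (use 1 z z' in auto)
  next
    case 2
    have "x = o' \<or> x = a" if "x \<in> T" "x$c = 1" for x using only[OF that] by blast
    then show ?thesis
      by (rule classified_if_two_top_split[OF c01 mc' o(1,2) 2(1,2) _ z(1) z'(1)])
        (use 2 z z' in auto)
  qed
qed

lemma classified_if_two_top:
  assumes C: "pyramid c a t1 t2 t3" and c01: "coord01 c" and o: "o' \<in> T" "o'$c = 1" "o' \<noteq> a"
    and only: "\<And>x. x \<in> T \<Longrightarrow> x$c = 1 \<Longrightarrow> x = a \<or> x = o'"
  shows "B_facet_classified T"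
proof -
  from C have a: "a \<in> T" "a$c = 1" and t1: "t1 \<in> T" "t1$c = 0" unfolding pyramid_def by auto
  obtain z' m where z': "z' \<in> T" "z'$c = 0" "z' \<noteq> t1" and mc: "m \<noteq> c" and
    mm: "(a$m = 1 \<and> o'$m = 0 \<and> t1$m = 0 \<and> z'$m = 0) \<or> (a$m = 0 \<and> o'$m = 1 \<and> t1$m = 0 \<and> z'$m = 0) \<or>
      (a$m = 0 \<and> o'$m = 0 \<and> t1$m = 1 \<and> z'$m = 0) \<or> (a$m = 0 \<and> o'$m = 0 \<and> t1$m = 0 \<and> z'$m = 1)"
    using unit_coord_pair_top_bottom[OF C a(1) o(1) t1(1) a(2) o(2) t1(2) o(3)[symmetric]] by blast
  then consider "a$m = 1" "o'$m = 0" "t1$m = 0" "z'$m = 0"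
    | "o'$m = 1" "a$m = 0" "t1$m = 0" "z'$m = 0"
    | "a$m = 0" "o'$m = 0" by auto
  then show ?thesis
  proof cases
    case 1
    show ?thesis
      by (rule classified_if_two_top_split[OF c01 mc a 1(1,2) only t1(1) z'(1)])
        (use 1 t1 z' in auto)
  next
    case 2
    have "x = o' \<or> x = a" if "x \<in> T" "x$c = 1" for x using only[OF that] by blast
    then show ?thesis
      by (rule classified_if_two_top_split[OF c01 mc o(1,2) 2(1,2) _ t1(1) z'(1)])
        (use 2 t1 z' in auto)
  next
    case 3
    show ?thesis by (rule classified_if_two_top_common_zero[OF C c01 o only mc 3])
  qed
qed

lemma cross_polytope_bottom_ones:
  assumes d: "distinct [c,j,m,l]"
    and U: "uj \<in> T" "um \<in> T" "ul \<in> T"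
    and uj: "uj$c = 1" "uj$j = 1" "uj$m = 0" "uj$l = 0"
    and um: "um$c = 1" "um$j = 0" "um$m = 1" "um$l = 0"
    and ul: "ul$c = 1" "ul$j = 0" "ul$m = 0" "ul$l = 1"
    and Z: "zj \<in> T" "zm \<in> T" "zl \<in> T"
    and zj: "zj$c = 0" "zj$j = 0" "zj$m \<noteq> 0" "zj$l \<noteq> 0"
    and zm: "zm$c = 0" "zm$m = 0" "zm$j \<noteq> 0" "zm$l \<noteq> 0"
    and zl: "zl$c = 0" "zl$l = 0" "zl$j \<noteq> 0" "zl$m \<noteq> 0"
  shows "zj$m = 1 \<and> zj$l = 1 \<and> zm$j = 1 \<and> zm$l = 1 \<and> zl$j = 1 \<and> zl$m = 1"
proof -
  have "\<alpha>$c + \<alpha>$j = \<beta>" "\<alpha>$c + \<alpha>$m = \<beta>" "\<alpha>$c + \<alpha>$l = \<beta>"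
    using on_hyperplane_perm[OF U(1) d] on_hyperplane_perm[OF U(2) d] on_hyperplane_perm[OF U(3) d]
      uj um ul by simp_all
  then have \<alpha>: "\<alpha>$m = \<alpha>$j" "\<alpha>$l = \<alpha>$j" by linarith+
  have "\<alpha>$j * (zj$m + zj$l) = \<beta>" "\<alpha>$j * (zm$j + zm$l) = \<beta>" "\<alpha>$j * (zl$j + zl$m) = \<beta>"
    using on_hyperplane_perm[OF Z(1) d] on_hyperplane_perm[OF Z(2) d] on_hyperplane_perm[OF Z(3) d]
      zj zm zl \<alpha> by (simp_all add: algebra_simps)
  then have sums: "zj$m + zj$l = zm$j + zm$l" "zj$m + zj$l = zl$j + zl$m"
    using normal_pos[of j] by (metis mult_left_cancel of_int_eq_iff order_less_irrefl)+
  have pos: "zj$m \<ge> 1" "zj$l \<ge> 1" "zm$j \<ge> 1" "zm$l \<ge> 1" "zl$j \<ge> 1" "zl$m \<ge> 1"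
    using nonneg[OF Z(1), of m] nonneg[OF Z(1), of l] nonneg[OF Z(2), of j] nonneg[OF Z(2), of l]
      nonneg[OF Z(3), of j] nonneg[OF Z(3), of m] zj zm zl by linarith+
  have "det4 uj um zj zm = 0" "det4 uj ul zj zl = 0" "det4 um ul zm zl = 0"
    using det4_eq0_if_no_unit_coordinate U Z uj um ul zj zm zl
    by (simp_all add: unit_coordinate_def ex_distinct4[OF d])
  moreover have "minor3 (um - uj) zj zm j m l = zj$l * zm$j - zj$m * zm$l"
    "minor3 (ul - uj) zj zl j m l = zj$l * zl$m - zj$m * zl$j"
    "minor3 (ul - um) zm zl j m l = zm$j * zl$m - zm$l * zl$j"
    unfolding minor3_def using uj um ul zj zm zl by (simp_all add: algebra_simps)
  ultimately have
    "zj$l * zm$j = zj$m * zm$l" "zj$l * zl$m = zj$m * zl$j" "zm$j * zl$m = zm$l * zl$j"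
    using det4_two_top_two_bottom[OF d uj(1) um(1) zj(1) zm(1)]
      det4_two_top_two_bottom[OF d uj(1) ul(1) zj(1) zl(1)]
      det4_two_top_two_bottom[OF d um(1) ul(1) zm(1) zl(1)] by auto
  then have eq: "zj$m = zj$l \<and> zm$j = zj$m \<and> zm$l = zj$m \<and> zl$j = zj$m \<and> zl$m = zj$m"
    by (intro cross_polytope_arith) (use pos sums in \<open>auto simp: algebra_simps\<close>)
  have "minor3 (um - uj) zj zl j m l = zj$l * zl$m + zj$l * zl$j"
    unfolding minor3_def using uj um zj zl by (simp add: algebra_simps)
  moreover have "zj$l * zl$m + zj$l * zl$j > 0" using pos by (simp add: add_pos_pos)
  ultimately have "det4 uj um zj zl \<noteq> 0"
    using det4_two_top_two_bottom[OF d uj(1) um(1) zj(1) zl(1)] by auto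
  then have "unit_coordinate uj um zj zl" by (rule unit_coordinate_if_det4_ne0[OF U(1,2) Z(1,3)])
  then have "zj$l = 1" using uj um zj zl by (auto simp: unit_coordinate_def ex_distinct4[OF d])
  with eq show ?thesis by auto
qed

lemma eq_std_cross_polytope:
  assumes d: "distinct [c,j,m,l]"
    and U: "uj \<in> T" "um \<in> T" "ul \<in> T"
    and uj: "uj$c = 1" "uj$j = 1" "uj$m = 0" "uj$l = 0"
    and um: "um$c = 1" "um$j = 0" "um$m = 1" "um$l = 0"
    and ul: "ul$c = 1" "ul$j = 0" "ul$m = 0" "ul$l = 1"
    and Z: "zj \<in> T" "zm \<in> T" "zl \<in> T"
    and zj: "zj$c = 0" "zj$j = 0" "zj$m \<noteq> 0" "zj$l \<noteq> 0"
    and zm: "zm$c = 0" "zm$m = 0" "zm$j \<noteq> 0" "zm$l \<noteq> 0"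
    and zl: "zl$c = 0" "zl$l = 0" "zl$j \<noteq> 0" "zl$m \<noteq> 0"
    and only: "\<And>x. x \<in> T \<Longrightarrow> x = uj \<or> x = um \<or> x = ul \<or> x = zj \<or> x = zm \<or> x = zl"
  shows "T = std_cross_polytope"
proof -
  have ones: "zj$m = 1" "zj$l = 1" "zm$j = 1" "zm$l = 1" "zl$j = 1" "zl$m = 1"
    using cross_polytope_bottom_ones[OF d U uj um ul Z zj zm zl] by auto
  have cross: "x \<in> std_cross_polytope"
    if "x$c \<in> {0,1}" "x$j \<in> {0,1}" "x$m \<in> {0,1}" "x$l \<in> {0,1}" "x$c + x$j + x$m + x$l = 2" for x
  proof -
    have "x$n = 0 \<or> x$n = 1" for n using distinct4_cases[OF d, of n] that(1-4) by auto
    moreover have "x$1 + x$2 + x$3 + x$4 = 2" using that(5) sum4_perm[OF d, of x] by simp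
    ultimately show ?thesis using mem_std_cross_polytope by blast
  qed
  have "T \<subseteq> std_cross_polytope"
  proof
    fix x assume "x \<in> T"
    then have "x = uj \<or> x = um \<or> x = ul \<or> x = zj \<or> x = zm \<or> x = zl" by (rule only)
    then show "x \<in> std_cross_polytope" using cross uj um ul zj zm zl ones by auto
  qed
  moreover have "distinct (map (\<lambda>x. (x$c, x$j, x$m, x$l)) [uj,um,ul,zj,zm,zl])"
    using uj um ul zj zm zl ones by simp
  then have "card {uj,um,ul,zj,zm,zl} = 6"
    by (simp only: distinct_map distinct_card[symmetric]) simp
  then have "card std_cross_polytope \<le> card T"
    using card_mono[OF finite_T, of "{uj,um,ul,zj,zm,zl}"] U Z card_std_cross_polytope by simp
  moreover have "finite std_cross_polytope" unfolding std_cross_polytope_def by simp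
  ultimately show ?thesis using card_seteq by blast
qed

lemma bottom_zero_if_three_top_units:
  assumes d: "distinct [c,j,m,l]" and U: "u1 \<in> T" "u2 \<in> T" "u3 \<in> T"
    and u1: "u1$c = 1" "u1$j = 1" "u1$m = 0" "u1$l = 0"
    and u2: "u2$c = 1" "u2$j = 0" "u2$m = 1" "u2$l = 0"
    and u3: "u3$c = 1" "u3$j = 0" "u3$m = 0" "u3$l = 1"
    and z: "z \<in> T" "z$c = 0"
  shows "z$j = 0 \<or> z$m = 0 \<or> z$l = 0"
proof -
  have "indep3 u2 u3 u1" by (rule indep3I[of c j]) (use d u1 u2 u3 in auto)
  then obtain n where "n \<noteq> c" "z$n = 0"
    using unit_coord_indep_top_bottom[OF U(2) U(3) U(1) z(1) u2(1) u3(1) u1(1) z(2)] by blast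
  then show ?thesis using distinct4_cases[OF d, of n] by auto
qed

lemma three_top_units_cross_polytope:
  assumes C: "pyramid c a t1 t2 t3" and c01: "coord01 c" and d: "distinct [c,j,m,l]"
    and U: "u1 \<in> T" "u2 \<in> T" "u3 \<in> T"
    and u1: "u1$c = 1" "u1$j = 1" "u1$m = 0" "u1$l = 0"
    and u2: "u2$c = 1" "u2$j = 0" "u2$m = 1" "u2$l = 0"
    and u3: "u3$c = 1" "u3$j = 0" "u3$m = 0" "u3$l = 1"
    and top: "\<And>x. x \<in> T \<Longrightarrow> x$c = 1 \<Longrightarrow> x = u1 \<or> x = u2 \<or> x = u3"
    and unique: "\<And>n z1 z2. n \<in> {j,m,l} \<Longrightarrow> z1 \<in> T \<Longrightarrow> z2 \<in> T \<Longrightarrow> z1$c = 0 \<Longrightarrow> z2$c = 0 \<Longrightarrow>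
      z1$n = 0 \<Longrightarrow> z2$n = 0 \<Longrightarrow> z1 = z2"
  shows "T = std_cross_polytope"
proof -
  from C have t: "t1 \<in> T" "t2 \<in> T" "t3 \<in> T" "t1$c = 0" "t2$c = 0" "t3$c = 0"
    unfolding pyramid_def by auto
  have td: "t1 \<noteq> t2" "t1 \<noteq> t3" "t2 \<noteq> t3" using pyramid_base_distinct[OF C] by auto
  note hit = bottom_zero_if_three_top_units[OF d U u1 u2 u3]
  have "\<not> (s$n = 0 \<and> s'$n = 0)" if "n \<in> {j,m,l}" "s \<in> {t1,t2,t3}" "s' \<in> {t1,t2,t3}" "s \<noteq> s'"
    for n s s' using unique[OF that(1)] that(2-4) t by blast
  then have "\<exists>zj\<in>{t1,t2,t3}. zj$j = 0 \<and> zj$m \<noteq> 0 \<and> zj$l \<noteq> 0"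
    "\<exists>zm\<in>{t1,t2,t3}. zm$m = 0 \<and> zm$j \<noteq> 0 \<and> zm$l \<noteq> 0"
    "\<exists>zl\<in>{t1,t2,t3}. zl$l = 0 \<and> zl$j \<noteq> 0 \<and> zl$m \<noteq> 0"
    using hit[OF t(1,4)] hit[OF t(2,5)] hit[OF t(3,6)] td by (simp; metis)+
  then obtain zj zm zl where zj: "zj \<in> {t1,t2,t3}" "zj$j = 0" "zj$m \<noteq> 0" "zj$l \<noteq> 0"
    and zm: "zm \<in> {t1,t2,t3}" "zm$m = 0" "zm$j \<noteq> 0" "zm$l \<noteq> 0"
    and zl: "zl \<in> {t1,t2,t3}" "zl$l = 0" "zl$j \<noteq> 0" "zl$m \<noteq> 0" by blast
  have Z: "zj \<in> T" "zm \<in> T" "zl \<in> T" "zj$c = 0" "zm$c = 0" "zl$c = 0" using zj zm zl t by auto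
  have only: "x = u1 \<or> x = u2 \<or> x = u3 \<or> x = zj \<or> x = zm \<or> x = zl" if x: "x \<in> T" for x
  proof (cases "x$c = 1")
    case True
    then show ?thesis using top[OF x] by blast
  next
    case False
    then have xc: "x$c = 0" using c01 x unfolding coord01_def by blast
    have "x$j = 0 \<or> x$m = 0 \<or> x$l = 0" by (rule hit[OF x xc])
    then show ?thesis using unique[of _ x] x xc Z zj zm zl by blast
  qed
  show ?thesis by (rule eq_std_cross_polytope[OF d U u1 u2 u3 Z(1-3)]) (use Z zj zm zl only in auto)
qed

lemma classified_if_three_top_units:
  assumes C: "pyramid c a t1 t2 t3" and c01: "coord01 c" and d: "distinct [c,j,m,l]"
    and U: "u1 \<in> T" "u2 \<in> T" "u3 \<in> T"
    and u1: "u1$c = 1" "u1$j = 1" "u1$m = 0" "u1$l = 0"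
    and u2: "u2$c = 1" "u2$j = 0" "u2$m = 1" "u2$l = 0"
    and u3: "u3$c = 1" "u3$j = 0" "u3$m = 0" "u3$l = 1"
    and top: "\<And>x. x \<in> T \<Longrightarrow> x$c = 1 \<Longrightarrow> x = u1 \<or> x = u2 \<or> x = u3"
  shows "B_facet_classified T"
proof (cases "\<exists>n\<in>{j,m,l}. \<exists>z1 z2. z1 \<in> T \<and> z2 \<in> T \<and> z1 \<noteq> z2 \<and>
    z1$c = 0 \<and> z2$c = 0 \<and> z1$n = 0 \<and> z2$n = 0")
  case True
  then obtain n z1 z2 where n: "n \<in> {j,m,l}"
    and z: "z1 \<in> T" "z2 \<in> T" "z1 \<noteq> z2" "z1$c = 0" "z2$c = 0" "z1$n = 0" "z2$n = 0" by blast
  have "\<exists>u\<in>{u1,u2,u3}. u$n = 1" using n u1 u2 u3 by auto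
  then obtain u where u: "u \<in> T" "u$c = 1" "u$n = 1" using U u1 u2 u3 by auto
  have top_n: "x$n = 0" if "x \<in> T" "x$c = 1" "x \<noteq> u" for x
    using top[OF that(1,2)] top[OF u(1,2)] n u(3) that(3) u1 u2 u3 by auto
  have "n \<noteq> c" using n d by auto
  then show ?thesis by (rule classified_if_unique_top_nonzero[OF c01 _ u top_n z])
next
  case False
  have unique: "z1 = z2"
    if "n \<in> {j,m,l}" "z1 \<in> T" "z2 \<in> T" "z1$c = 0" "z2$c = 0" "z1$n = 0" "z2$n = 0" for n z1 z2
    using False that by (metis (mono_tags))
  have "T = std_cross_polytope"
    by (rule three_top_units_cross_polytope[OF C c01 d U u1 u2 u3 top unique])
  then show ?thesis by blast
qed

lemma top_zeros_are_pair:
  assumes jc: "j \<noteq> c"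
    and A: "a1 \<in> T" "a2 \<in> T" "a1$c = 1" "a2$c = 1" "a1 \<noteq> a2" "a1$j = 0" "a2$j = 0"
    and K: "cc \<in> T" "cc$c = 1" "cc$j = 1" and t: "t \<in> T" "t$c = 0" "t$j \<noteq> 0"
    and x: "x \<in> T" "x$c = 1" "x$j = 0"
  shows "x = a1 \<or> x = a2"
proof (rule ccontr)
  assume h: "\<not> ?thesis"
  have "unit_swap_outside a1 a2 c j"
    by (rule unit_swap_pair_top_indep[OF A(1,2) K(1) t(1) A(3,4) K(2) t(2) A(5) jc])
      (use A K t in auto)
  moreover have "unit_swap_outside a1 x c j"
    by (rule unit_swap_pair_top_indep[OF A(1) x(1) K(1) t(1) A(3) x(2) K(2) t(2)])
      (use jc A K t x h in auto)
  moreover have "unit_swap_outside a2 x c j"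
    by (rule unit_swap_pair_top_indep[OF A(2) x(1) K(1) t(1) A(4) x(2) K(2) t(2)])
      (use jc A K t x h in auto)
  ultimately show False using no_three_unit_swaps[OF A(1,2) x(1), of c j] A x h jc by auto
qed

lemma classified_if_unique_top_one_split:
  assumes C: "pyramid c a t1 t2 t3" and c01: "coord01 c" and co: "top_coord01 c j"
    and d: "distinct [c,j,m,l]"
    and A: "a1 \<in> T" "a2 \<in> T" "a1$c = 1" "a2$c = 1" "a1 \<noteq> a2" "a1$j = 0" "a2$j = 0"
      "a1$m = 1" "a2$m = 0"
    and K: "cc \<in> T" "cc$c = 1" "cc$j = 1" "cc$m = 0"
    and uniq: "\<And>x. x \<in> T \<Longrightarrow> x$c = 1 \<Longrightarrow> x$j = 1 \<Longrightarrow> x = cc"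
    and tt: "ta \<in> T" "tb \<in> T" "ta \<noteq> tb" "ta$c = 0" "tb$c = 0" "ta$j \<noteq> 0" "tb$j \<noteq> 0"
  shows "B_facet_classified T"
proof -
  have jc: "j \<noteq> c" using d by auto
  have top: "x = cc \<or> x = a1 \<or> x = a2" if "x \<in> T" "x$c = 1" for x
    using co uniq[OF that] top_zeros_are_pair[OF jc A(1-7) K(1-3) tt(1,4,6) that] that
    unfolding top_coord01_def by blast
  show ?thesis
  proof (cases "a1$l = 0 \<and> a2$l = 1 \<and> cc$l = 0")
    case True
    show ?thesis
      by (rule classified_if_three_top_units[OF C c01 d K(1) A(1,2) _ _ _ _ _ _ _ _ _ _ _ _ top])
        (use True K A in auto)
  next
    case False
    have zm: "z$m = 0" if z: "z \<in> T" "z$c = 0" "z$j \<noteq> 0" for z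
    proof -
      obtain n where n: "n \<noteq> c" "n \<noteq> j" "z$n = 0" "cc$n = 0"
        and swap: "(a1$n = 0 \<and> a2$n = 1) \<or> (a1$n = 1 \<and> a2$n = 0)"
        by (rule unit_swap_pair_top_indep_at[OF A(1,2) K(1) z(1) A(3,4) K(2) z(2) A(5) jc])
          (use A K z in auto)
      have "n \<noteq> l"
      proof
        assume "n = l"
        with swap False n(4) have l: "a1$l = 1" "a2$l = 0" by auto
        have "a2$k \<le> a1$k" for k
          by (rule le_if_distinct4[OF d]) (use A l nonneg[OF A(1)] in auto)
        then show False using eq_if_le[OF A(2) A(1)] A(5) by metis
      qed
      then show ?thesis using distinct4_cases[OF d, of n] n by auto
    qed
    have top_m: "x$m = 0" if "x \<in> T" "x$c = 1" "x \<noteq> a1" for x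
      using top[OF that(1,2)] that(3) A K by auto
    have "m \<noteq> c" using d by auto
    show ?thesis
      by (rule classified_if_unique_top_nonzero[OF c01 \<open>m \<noteq> c\<close> A(1,3,8) top_m tt(1-5)])
        (use zm tt in auto)
  qed
qed

lemma two_base_points_nonzero:
  assumes C: "pyramid c a t1 t2 t3"
    and unique: "\<And>z1 z2. z1 \<in> T \<Longrightarrow> z2 \<in> T \<Longrightarrow> z1$c = 0 \<Longrightarrow> z2$c = 0 \<Longrightarrow> z1$j = 0 \<Longrightarrow> z2$j = 0 \<Longrightarrow> z1 = z2"
  obtains ta tb where "ta \<in> T" "tb \<in> T" "ta \<noteq> tb" "ta$c = 0" "tb$c = 0" "ta$j \<noteq> 0" "tb$j \<noteq> 0"
proof -
  from C have t: "t1 \<in> T" "t2 \<in> T" "t3 \<in> T" "t1$c = 0" "t2$c = 0" "t3$c = 0"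
    unfolding pyramid_def by auto
  have "t1 \<noteq> t2" "t1 \<noteq> t3" "t2 \<noteq> t3" using pyramid_base_distinct[OF C] by auto
  then have "\<not> (t1$j = 0 \<and> t2$j = 0)" "\<not> (t1$j = 0 \<and> t3$j = 0)" "\<not> (t2$j = 0 \<and> t3$j = 0)"
    using unique t by blast+
  then show ?thesis using that t \<open>t1 \<noteq> t2\<close> \<open>t1 \<noteq> t3\<close> \<open>t2 \<noteq> t3\<close> by metis
qed

lemma classified_if_unique_top_one:
  assumes C: "pyramid c a t1 t2 t3" and c01: "coord01 c" and jc: "j \<noteq> c" and co: "top_coord01 c j"
    and A: "a1 \<in> T" "a2 \<in> T" "a1$c = 1" "a2$c = 1" "a1 \<noteq> a2" "a1$j = 0" "a2$j = 0"
    and K: "cc \<in> T" "cc$c = 1" "cc$j = 1"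
    and uniq: "\<And>x. x \<in> T \<Longrightarrow> x$c = 1 \<Longrightarrow> x$j = 1 \<Longrightarrow> x = cc"
  shows "B_facet_classified T"
proof (cases "\<exists>z1 z2. z1 \<in> T \<and> z2 \<in> T \<and> z1 \<noteq> z2 \<and> z1$c = 0 \<and> z2$c = 0 \<and> z1$j = 0 \<and> z2$j = 0")
  case True
  then obtain z1 z2 where z: "z1 \<in> T" "z2 \<in> T" "z1 \<noteq> z2" "z1$c = 0" "z2$c = 0" "z1$j = 0" "z2$j = 0"
    by blast
  have "x$j = 0" if "x \<in> T" "x$c = 1" "x \<noteq> cc" for x
    using co uniq[OF that(1,2)] that unfolding top_coord01_def by blast
  then show ?thesis by (rule classified_if_unique_top_nonzero[OF c01 jc K _ z])
next
  case False
  then obtain ta tb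
    where tt: "ta \<in> T" "tb \<in> T" "ta \<noteq> tb" "ta$c = 0" "tb$c = 0" "ta$j \<noteq> 0" "tb$j \<noteq> 0"
    using two_base_points_nonzero[OF C] by metis
  obtain m where m: "m \<noteq> c" "m \<noteq> j" "cc$m = 0"
    and swap: "(a1$m = 0 \<and> a2$m = 1) \<or> (a1$m = 1 \<and> a2$m = 0)"
    by (rule unit_swap_pair_top_indep_at[OF A(1,2) K(1) tt(1) A(3,4) K(2) tt(4) A(5) jc])
      (use A K tt in auto)
  have "distinct [c,j,m]" using jc m by auto
  then obtain l where d: "distinct [c,j,m,l]" by (rule distinct3_extend)
  from swap show ?thesis
  proof
    assume h: "a1$m = 0 \<and> a2$m = 1"
    show ?thesis
      by (rule classified_if_unique_top_one_split
          [OF C c01 co d A(2,1,4,3) _ A(7,6) _ _ K _ uniq tt])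
        (use h A m in auto)
  next
    assume h: "a1$m = 1 \<and> a2$m = 0"
    show ?thesis
      by (rule classified_if_unique_top_one_split[OF C c01 co d A _ _ K _ uniq tt])
        (use h m in auto)
  qed
qed

lemma unit_swap_pair_top_at_bottom:
  assumes C: "pyramid c a t1 t2 t3" and T: "P \<in> T" "Q \<in> T" "z \<in> T"
    and c: "P$c = 1" "Q$c = 1" "z$c = 0" and ne: "P \<noteq> Q"
    and nocz: "\<And>n. n \<noteq> c \<Longrightarrow> \<not> (P$n = 0 \<and> Q$n = 0)"
  shows "\<exists>n. n \<noteq> c \<and> z$n = 0 \<and> ((P$n = 1 \<and> Q$n = 0) \<or> (P$n = 0 \<and> Q$n = 1))"
proof -
  obtain z' n where z': "z' \<in> T" "z'$c = 0" "z' \<noteq> z" and nc: "n \<noteq> c" and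
    mm: "(P$n = 1 \<and> Q$n = 0 \<and> z$n = 0 \<and> z'$n = 0) \<or> (P$n = 0 \<and> Q$n = 1 \<and> z$n = 0 \<and> z'$n = 0) \<or>
      (P$n = 0 \<and> Q$n = 0 \<and> z$n = 1 \<and> z'$n = 0) \<or> (P$n = 0 \<and> Q$n = 0 \<and> z$n = 0 \<and> z'$n = 1)"
    using unit_coord_pair_top_bottom[OF C T c ne] by blast
  show ?thesis using mm nocz[OF nc] nc by auto
qed

definition top_collinear :: "4 \<Rightarrow> bool" where
  "top_collinear c \<longleftrightarrow>
     (\<forall>P\<in>T. \<forall>Q\<in>T. \<forall>R\<in>T. P$c = 1 \<longrightarrow> Q$c = 1 \<longrightarrow> R$c = 1 \<longrightarrow> \<not> indep3 P Q R)"

lemma top_collinearD: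
  "top_collinear c \<Longrightarrow> P \<in> T \<Longrightarrow> Q \<in> T \<Longrightarrow> R \<in> T \<Longrightarrow> P$c = 1 \<Longrightarrow> Q$c = 1 \<Longrightarrow> R$c = 1 \<Longrightarrow>
    \<not> indep3 P Q R"
  unfolding top_collinear_def by blast

lemma top_coords_agree:
  assumes col: "top_collinear c" and T: "x \<in> T" "y \<in> T" "w \<in> T" and c: "x$c = 1" "y$c = 1" "w$c = 1"
    and ne: "x \<noteq> y"
    and n: "n \<noteq> c" "x$n = y$n"
  shows "w$n = x$n"
proof (rule ccontr)
  assume "w$n \<noteq> x$n"
  have "indep3 x y w" by (rule indep3I[of c n]) (use \<open>w$n \<noteq> x$n\<close> c ne n in auto)
  then show False using top_collinearD[OF col T c] by blast
qed

lemma top_vanishes_if_common_zero: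
  assumes col: "top_collinear c" and P: "P \<in> T" "Q \<in> T" "P$c = 1" "Q$c = 1" "P \<noteq> Q"
    and n: "n \<noteq> c" "P$n = 0" "Q$n = 0"
    and u: "u \<in> T" "u$c = 1"
  shows "u$n = 0"
proof (rule ccontr)
  assume "u$n \<noteq> 0"
  have "indep3 P Q u" by (rule indep3I[of c n]) (use P n u \<open>u$n \<noteq> 0\<close> in auto)
  then show False using top_collinearD[OF col P(1,2) u(1) P(3,4) u(2)] by blast
qed

lemma unit_swap_coord_unique:
  assumes C: "pyramid c a t1 t2 t3"
    and col: "top_collinear c"
    and T: "P \<in> T" "Q \<in> T" "R \<in> T" and c: "P$c = 1" "Q$c = 1" "R$c = 1"
    and ne: "P \<noteq> Q" "P \<noteq> R" "Q \<noteq> R"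
    and noPR: "\<And>n. n \<noteq> c \<Longrightarrow> \<not> (P$n = 0 \<and> R$n = 0)" and noQR: "\<And>n. n \<noteq> c \<Longrightarrow> \<not> (Q$n = 0 \<and> R$n = 0)"
    and n: "n \<noteq> c" "(P$n = 1 \<and> Q$n = 0) \<or> (P$n = 0 \<and> Q$n = 1)"
    and n': "n' \<noteq> c" "(P$n' = 1 \<and> Q$n' = 0) \<or> (P$n' = 0 \<and> Q$n' = 1)"
  shows "n = n'"
proof (rule ccontr)
  assume "n \<noteq> n'"
  from C have t1: "t1 \<in> T" "t1$c = 0" unfolding pyramid_def by auto
  text \<open>On the line through P and Q, a coordinate where P and Q swap 0 and 1 is not
    0/1-valued at R.\<close>
  have off01: "R$k \<noteq> 0 \<and> R$k \<noteq> 1" if k: "k \<noteq> c"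
    and swap: "(P$k = 1 \<and> Q$k = 0) \<or> (P$k = 0 \<and> Q$k = 1)" for k
  proof -
    have "R$k \<noteq> P$k"
    proof
      assume "R$k = P$k"
      have "Q$k = P$k"
        by (rule top_coords_agree[OF col T(1,3,2) c(1,3,2) ne(2) k \<open>R$k = P$k\<close>[symmetric]])
      then show False using swap by auto
    qed
    moreover have "R$k \<noteq> Q$k"
    proof
      assume "R$k = Q$k"
      have "P$k = Q$k"
        by (rule top_coords_agree[OF col T(2,3,1) c(2,3,1) ne(3) k \<open>R$k = Q$k\<close>[symmetric]])
      then show False using swap by auto
    qed
    ultimately show ?thesis using swap by auto
  qed
  obtain p where p: "p \<noteq> c" "(P$p = 1 \<and> R$p = 0) \<or> (P$p = 0 \<and> R$p = 1)"
    using unit_swap_pair_top_at_bottom[OF C T(1,3) t1(1) c(1,3) t1(2) ne(2) noPR] by blast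
  obtain q where q: "q \<noteq> c" "(Q$q = 1 \<and> R$q = 0) \<or> (Q$q = 0 \<and> R$q = 1)"
    using unit_swap_pair_top_at_bottom[OF C T(2,3) t1(1) c(2,3) t1(2) ne(3) noQR] by blast
  have "p \<noteq> n" "p \<noteq> n'" "q \<noteq> n" "q \<noteq> n'" using off01[OF n] off01[OF n'] p(2) q(2) by auto
  then have "distinct [c,n,n',p]" using n(1) n'(1) p(1) \<open>n \<noteq> n'\<close> by simp
  then have "q = p" using distinct4_cases[of c n n' p q] q(1) \<open>q \<noteq> n\<close> \<open>q \<noteq> n'\<close> by blast
  then have "P$p = Q$p" using p(2) q(2) by auto
  then have "R$p = P$p" by (rule top_coords_agree[OF col T c ne(1) p(1)])
  with p(2) show False by auto
qed

lemma collinear_top_triple_common_zero: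
  assumes C: "pyramid c a t1 t2 t3"
    and col: "top_collinear c"
    and T: "x \<in> T" "y \<in> T" "w \<in> T" and c: "x$c = 1" "y$c = 1" "w$c = 1"
    and ne: "x \<noteq> y" "x \<noteq> w" "y \<noteq> w"
    and nxy: "\<And>n. n \<noteq> c \<Longrightarrow> \<not> (x$n = 0 \<and> y$n = 0)"
    and nxw: "\<And>n. n \<noteq> c \<Longrightarrow> \<not> (x$n = 0 \<and> w$n = 0)"
    and nyw: "\<And>n. n \<noteq> c \<Longrightarrow> \<not> (y$n = 0 \<and> w$n = 0)"
  shows False
proof -
  from C have t: "t1 \<in> T" "t2 \<in> T" "t3 \<in> T" "t1$c = 0" "t2$c = 0" "t3$c = 0"
    and D: "det4 a t1 t2 t3 \<noteq> 0" unfolding pyramid_def by auto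
  have nwy: "\<And>n. n \<noteq> c \<Longrightarrow> \<not> (w$n = 0 \<and> y$n = 0)" using nyw by blast
  text \<open>The coordinate where two top points swap 0 and 1 is unique, and it vanishes on the base.\<close>
  obtain n where n: "n \<noteq> c" "(x$n = 1 \<and> y$n = 0) \<or> (x$n = 0 \<and> y$n = 1)"
    using unit_swap_pair_top_at_bottom[OF C T(1,2) t(1) c(1,2) t(4) ne(1) nxy] by blast
  have base_n: "t$n = 0" if bottom: "t \<in> T" "t$c = 0" for t
  proof -
    obtain n' where "n' \<noteq> c" "t$n' = 0" "(x$n' = 1 \<and> y$n' = 0) \<or> (x$n' = 0 \<and> y$n' = 1)"
      using unit_swap_pair_top_at_bottom[OF C T(1,2) bottom(1) c(1,2) bottom(2) ne(1) nxy] by blast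
    moreover have "n' = n"
      by (rule unit_swap_coord_unique[OF C col T c ne nxw nyw]) (use n calculation in auto)
    ultimately show ?thesis by simp
  qed
  obtain r where r: "r \<noteq> c" "(x$r = 1 \<and> w$r = 0) \<or> (x$r = 0 \<and> w$r = 1)"
    using unit_swap_pair_top_at_bottom[OF C T(1,3) t(1) c(1,3) t(4) ne(2) nxw] by blast
  have base_r: "t$r = 0" if bottom: "t \<in> T" "t$c = 0" for t
  proof -
    obtain r' where "r' \<noteq> c" "t$r' = 0" "(x$r' = 1 \<and> w$r' = 0) \<or> (x$r' = 0 \<and> w$r' = 1)"
      using unit_swap_pair_top_at_bottom[OF C T(1,3) bottom(1) c(1,3) bottom(2) ne(2) nxw] by blast
    moreover have "r' = r"
      by (rule unit_swap_coord_unique[OF C col T(1,3,2) c(1,3,2) ne(2,1) ne(3)[symmetric] nxy nwy])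
        (use r calculation in auto)
    ultimately show ?thesis by simp
  qed
  have "n \<noteq> r"
  proof
    assume "n = r"
    then have "y$n = w$n" using n(2) r(2) by auto
    then have "x$n = y$n" by (rule top_coords_agree[OF col T(2,3,1) c(2,3,1) ne(3) n(1)])
    with n(2) show False by auto
  qed
  then have "det4 a t1 t2 t3 = 0" by (rule det4_two_zero_columns) (use base_n base_r t in auto)
  then show False using D by simp
qed

lemma classified_if_top_collinear:
  assumes C: "pyramid c a t1 t2 t3" and c01: "coord01 c" and T: "x \<in> T" "y \<in> T" "w \<in> T"
    and c: "x$c = 1" "y$c = 1" "w$c = 1" and ne: "x \<noteq> y" "x \<noteq> w" "y \<noteq> w"
    and col: "top_collinear c"
  shows "B_facet_classified T"
proof (cases "\<exists>n. n \<noteq> c \<and> ((x$n = 0 \<and> y$n = 0) \<or> (x$n = 0 \<and> w$n = 0) \<or> (y$n = 0 \<and> w$n = 0))")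
  case True
  then obtain n where n: "n \<noteq> c"
    and zero: "(x$n = 0 \<and> y$n = 0) \<or> (x$n = 0 \<and> w$n = 0) \<or> (y$n = 0 \<and> w$n = 0)"
    by blast
  have "u$n = 0" if u: "u \<in> T" "u$c = 1" for u
  proof -
    consider "x$n = 0" "y$n = 0" | "x$n = 0" "w$n = 0" | "y$n = 0" "w$n = 0" using zero by blast
    then show ?thesis
    proof cases
      case 1
      show ?thesis by (rule top_vanishes_if_common_zero[OF col T(1,2) c(1,2) ne(1) n 1 u])
    next
      case 2
      show ?thesis by (rule top_vanishes_if_common_zero[OF col T(1,3) c(1,3) ne(2) n 2 u])
    next
      case 3
      show ?thesis by (rule top_vanishes_if_common_zero[OF col T(2,3) c(2,3) ne(3) n 3 u])
    qed
  qed
  then show ?thesis by (rule classified_if_top_vanishes[OF C c01 n T c ne])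
next
  case False
  have False by (rule collinear_top_triple_common_zero[OF C col T c ne]) (use False in auto)
  then show ?thesis by simp
qed

lemma classified_if_top_not_collinear:
  assumes C: "pyramid c a t1 t2 t3" and c01: "coord01 c"
    and T: "x \<in> T" "y \<in> T" "w \<in> T" and c: "x$c = 1" "y$c = 1" "w$c = 1"
      and ne: "x \<noteq> y" "x \<noteq> w" "y \<noteq> w"
    and not_col: "\<not> top_collinear c"
  shows "B_facet_classified T"
proof -
  from C have t1: "t1 \<in> T" "t1$c = 0" unfolding pyramid_def by auto
  obtain P Q R where "P \<in> T" "Q \<in> T" "R \<in> T" "P$c = 1" "Q$c = 1" "R$c = 1" "indep3 P Q R"
    using not_col unfolding top_collinear_def by blast
  then obtain j where "top_zero_pair c j" using exists_top_zero_pair[OF t1] by blast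
  then obtain a1 a2 where jc: "j \<noteq> c" and co: "top_coord01 c j"
    and A: "a1 \<in> T" "a2 \<in> T" "a1$c = 1" "a2$c = 1" "a1 \<noteq> a2" "a1$j = 0" "a2$j = 0"
    unfolding top_zero_pair_def by blast
  show ?thesis
  proof (cases "\<forall>u\<in>T. u$c = 1 \<longrightarrow> u$j = 0")
    case True
    then show ?thesis using classified_if_top_vanishes[OF C c01 jc T c ne] by blast
  next
    case False
    then obtain cc where cc: "cc \<in> T" "cc$c = 1" "cc$j = 1" using co unfolding top_coord01_def
      by blast
    have "u = cc" if "u \<in> T" "u$c = 1" "u$j = 1" for u
    proof (rule ccontr)
      assume "u \<noteq> cc"
      then show False using no_two_top_ones[OF C jc A that(1) cc(1) that(2) cc(2)] that(3) cc(3)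
        by blast
    qed
    then show ?thesis by (rule classified_if_unique_top_one[OF C c01 jc co A cc])
  qed
qed

lemma classified_if_coord01_pyramid:
  assumes C: "pyramid c a t1 t2 t3" and c01: "coord01 c"
  shows "B_facet_classified T"
proof -
  from C have a: "a \<in> T" "a$c = 1" unfolding pyramid_def by auto
  have top: "x$c = 1" if "x \<in> T" "x$c \<noteq> 0" for x using c01 that unfolding coord01_def by blast
  show ?thesis
  proof (cases "\<forall>x\<in>T. x$c \<noteq> 0 \<longrightarrow> x = a")
    case True
    then show ?thesis by (intro classified_B1I[OF a]) blast
  next
    case False
    then obtain o' where o': "o' \<in> T" "o'$c = 1" "o' \<noteq> a" using top by blast
    show ?thesis
    proof (cases "\<forall>x\<in>T. x$c = 1 \<longrightarrow> x = a \<or> x = o'")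
      case True
      then show ?thesis by (intro classified_if_two_top[OF C c01 o']) blast
    next
      case False
      then obtain o'' where o'': "o'' \<in> T" "o''$c = 1" "o'' \<noteq> a" "o'' \<noteq> o'" by blast
      show ?thesis
        using classified_if_top_collinear[OF C c01 a(1) o'(1) o''(1) a(2) o'(2) o''(2)]
          classified_if_top_not_collinear[OF C c01 a(1) o'(1) o''(1) a(2) o'(2) o''(2)] o' o''
            by metis
    qed
  qed
qed

theorem classified: "B_facet_classified T"
proof -
  obtain i p t1 t2 t3 where "pyramid i p t1 t2 t3" using exists_pyramid by blast
  then obtain c a s1 s2 s3 where "pyramid c a s1 s2 s3" "coord01 c" using exists_coord01_pyramid
    by blast
  then show ?thesis by (rule classified_if_coord01_pyramid)
qed
end

theorem mainTheorem1:
  fixes \<tau> :: "(int ^ 4) set"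
  assumes "B_facet \<tau>"
  shows "B1_facet \<tau> \<or> B2_facet \<tau> \<or> flat_border \<tau> \<or> \<tau> = std_cross_polytope"
proof -
  obtain \<alpha> \<beta> where "B_facet4 \<tau> \<alpha> \<beta>" by (rule B_facet4_if_B_facet[OF assms])
  then interpret B_facet4 \<tau> \<alpha> \<beta> .
  show ?thesis by (rule classified)
qed

end
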